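(* Fix $d$ with $d^*\le d\le d_{\max}$ (i.e. the null hypothesis $H_{0,d}:\mathcal{L}_d=\mathcal{L}_{d_{\max}}$ holds) and fix $\tau\in[0,1)$. Assume Conditions (C1)–(C3). Then, as $n\to\infty$, \[ \{n/(2-\tau)\}^{1/2}\,\widehat{\psi}_d \rightsquigarrow \mathcal{N}(0,\nu_d^2),\qquad \nu_d^2=2(1-\tau)\sigma_{d^*}^2,\quad \sigma_{d^*}^2=\mathrm{var}_{\mathbb{P}}\{\ell(Y,g_{d^*}(R))\}. \]
   Context: Population setup. Let $(X,Y)$ have law $\mathbb{Q}$ on $\mathcal{X}\times\mathcal{Y}$. Let $R\in\mathbb{R}^{d_{\max}}$ be an unobserved random vector on the same probability space (an oracle representation, zero-padded to dimension $d_{\max}$), and let $\mathbb{P}$ be the joint law of $Z=(R,X,Y)$. Let $\widehat{\mathcal{Y}}$ be a normed prediction space, $\ell:\mathcal{Y}\times\widehat{\mathcal{Y}}\to\mathbb{R}$ a loss, $\mathcal{G}$ a class of measurable maps $\mathbb{R}^{d_{\max}}\to\widehat{\mathcal{Y}}$, and for $0\le d\le d_{\max}$, $\mathcal{G}_d=\{g\in\mathcal{G}:g(r)=g(r')\text{ whenever } r_{[d]}=r'_{[d]}\}$ where $r_{[d]}$ is the vector of the first $d$ coordinates. Let $\mathcal{L}(g,\mathbb{P})=\mathbb{E}_{\mathbb{P}}\{\ell(Y,g(R))\}$, $\mathcal{L}_d=\min_{g\in\mathcal{G}_d}\mathcal{L}(g,\mathbb{P})$ (attained) with a minimizer $g_d\in\mathcal{G}_d$,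 and $d^*=\min\{0\le d\le d_{\max}:\mathcal{L}_d=\mathcal{L}_{d_{\max}}\}$. Since $\mathcal{G}_0\subseteq\cdots\subseteq\mathcal{G}_{d_{\max}}$, $\mathcal{L}_d=\mathcal{L}_{d_{\max}}$ iff $d\ge d^*$. Procedure. Observe $(X_i,Y_i)$, $i\in[n]$, i.i.d. from $\mathbb{Q}$, with unobserved $R_i$ such that $Z_i=(R_i,X_i,Y_i)$ are i.i.d. $\mathbb{P}$. Fix $K\ge2$ and $\tau\in[0,1)$ (both fixed as $n\to\infty$). Partition $[n]$ into folds $I_1,\dots,I_K$ of (asymptotically) equal size; $I_{-k}=[n]\setminus I_k$. For each $k$, using only data indexed by $I_{-k}$, compute a reduction map $\widehat\varphi_{-k}:\mathcal{X}\to\mathbb{R}^{d_{\max}}$ and, for each $d$, a prediction rule $\widehat g_{-k;d}\in\mathcal{G}_d$. Split $I_k$ into disjoint $I_{k,a},I_{k,b},I_{k,o}$ with $|I_{k,a}|=|I_{k,b}|$ and $|I_{k,o}|/(|I_{k,a}|+|I_{k,o}|)=\tau$. For $J\in\{a,b,o\}$ and $g\in\mathcal{G}$ put $\widehat{\mathcal{L}}_{-k}(g,\widehat{\mathbb{Q}}_{k,J})=|I_{k,J}|^{-1}\sum_{i\in I_{k,J}}\ell(Y_i,g(\widehat\varphi_{-k}(X_i)))$, and analogously $\widehat{\mathcal{L}}_{-k}(g,\widehat{\mathbb{Q}}_k)$ averaging over $I_k$. Define $\widehat{\mathcal{L}}_{d,k}=\tau\widehat{\mathcal{L}}_{-k}(\widehat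 g_{-k;d},\widehat{\mathbb{Q}}_{k,o})+(1-\tau)\widehat{\mathcal{L}}_{-k}(\widehat g_{-k;d},\widehat{\mathbb{Q}}_{k,a})$, $\widehat{\mathcal{L}}_{d_{\max},k}=\tau\widehat{\mathcal{L}}_{-k}(\widehat g_{-k;d_{\max}},\widehat{\mathbb{Q}}_{k,o})+(1-\tau)\widehat{\mathcal{L}}_{-k}(\widehat g_{-k;d_{\max}},\widehat{\mathbb{Q}}_{k,b})$, and $\widehat\psi_d=K^{-1}\sum_{k=1}^K(\widehat{\mathcal{L}}_{d,k}-\widehat{\mathcal{L}}_{d_{\max},k})$. Norm and conditions. For a measurable $h:\mathrm{supp}(\mathbb{P})\to\widehat{\mathcal{Y}}$, $\|h\|$ denotes a fixed norm such as $\|h\|_{L_2(\mathbb{P})}=(\int\|h(z)\|_{\widehat{\mathcal{Y}}}^2\,d\mathbb{P}(z))^{1/2}$ or $\|h\|_{L_\infty(\mathbb{P})}$; a composite $g\circ\varphi$ ($\varphi:\mathcal{X}\to\mathbb{R}^{d_{\max}}$, $g\in\mathcal{G}$) is viewed as $z=(r,x,y)\mapsto g(\varphi(x))$ and $g_{d^*}$ as $z\mapsto g_{d^*}(r)$; norms and expectations of trained objects are computed treating them as fixed (conditionally on the training data). (C1) For each $d\ge d^*$ there is $C>0$ such that for any sequence $(\varphi^{(j)},g^{(j)})$ with $\varphi^{(j)}:\mathcal{X}\to\mathbb{R}^{d_{\max}}$, $g^{(j)}\in\mathcal{G}_d$ and $\|g^{(j)}\circ\varphi^{(j)}-g_{d^*}\|\to0$,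 for all large $j$: $|\mathbb{E}_{\mathbb{P}}\{\ell(Y,g^{(j)}\circ\varphi^{(j)}(X))-\ell(Y,g_{d^*}(R))\}|\le C\|g^{(j)}\circ\varphi^{(j)}-g_{d^*}\|^2$. (C2) For each $d\ge d^*$ and each $k$, $\|\widehat g_{-k;d}\circ\widehat\varphi_{-k}-g_{d^*}\|=o_{\mathbb{P}}(n^{-1/4})$. (C3) For each $d\ge d^*$ and each $k$, $\mathbb{E}_{\mathbb{P}}[\{\ell(Y,\widehat g_{-k;d}\circ\widehat\varphi_{-k}(X))-\ell(Y,g_{d^*}(R))\}^2\mid \widehat g_{-k;d},\widehat\varphi_{-k}]=o_{\mathbb{P}}(1)$. *)

theory Defs
  imports "HOL-Probability.Probability"
begin

text \<open>Oracle representations in R^{d_max} are encoded as functions nat => real;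
  a map on R^{d_max} is a map on nat => real depending only on the first d_max coordinates.\<close>

definition MR :: "(nat \<Rightarrow> real) measure" where
  "MR = PiM UNIV (\<lambda>_. (borel :: real measure))"

definition Gd :: "((nat \<Rightarrow> real) \<Rightarrow> 'b) set \<Rightarrow> nat \<Rightarrow> ((nat \<Rightarrow> real) \<Rightarrow> 'b) set" where
  "Gd G d = {g \<in> G. \<forall>r r'. (\<forall>j<d. r j = r' j) \<longrightarrow> g r = g r'}"

text \<open>Population risk L(g,P) = E_P l(Y, g(R)), with Z = (R, X, Y).\<close>
definition risk :: "((nat \<Rightarrow> real) \<times> 'x \<times> 'y) measure \<Rightarrow> ('y \<Rightarrow> 'b \<Rightarrow> real)
    \<Rightarrow> ((nat \<Rightarrow> real) \<Rightarrow> 'b) \<Rightarrow> real" where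
  "risk P l g = (\<integral>z. l (snd (snd z)) (g (fst z)) \<partial>P)"

definition Lmin :: "((nat \<Rightarrow> real) \<times> 'x \<times> 'y) measure \<Rightarrow> ('y \<Rightarrow> 'b \<Rightarrow> real)
    \<Rightarrow> ((nat \<Rightarrow> real) \<Rightarrow> 'b) set \<Rightarrow> nat \<Rightarrow> real" where
  "Lmin P l G d = (INF g\<in>Gd G d. risk P l g)"

definition dstar :: "((nat \<Rightarrow> real) \<times> 'x \<times> 'y) measure \<Rightarrow> ('y \<Rightarrow> 'b \<Rightarrow> real)
    \<Rightarrow> ((nat \<Rightarrow> real) \<Rightarrow> 'b) set \<Rightarrow> nat \<Rightarrow> nat" where
  "dstar P l G dmax = (LEAST d. Lmin P l G d = Lmin P l G dmax)"

definition small_oP :: "'a measure \<Rightarrow> (nat \<Rightarrow> 'a \<Rightarrow> real) \<Rightarrow> (nat \<Rightarrow> real) \<Rightarrow> bool" where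
  "small_oP M W r \<longleftrightarrow> (\<forall>n. W n \<in> borel_measurable M) \<and>
     (\<forall>e>0. (\<lambda>n. measure M {\<omega> \<in> space M. \<bar>W n \<omega>\<bar> > e * r n}) \<longlonglongrightarrow> 0)"

definition small_oP1_enn :: "'a measure \<Rightarrow> (nat \<Rightarrow> 'a \<Rightarrow> ennreal) \<Rightarrow> bool" where
  "small_oP1_enn M W \<longleftrightarrow> (\<forall>n. W n \<in> borel_measurable M) \<and>
     (\<forall>e>0. (\<lambda>n. measure M {\<omega> \<in> space M. W n \<omega> > ennreal e}) \<longlonglongrightarrow> 0)"

definition emp_loss :: "('y \<Rightarrow> 'b \<Rightarrow> real) \<Rightarrow> ('x \<Rightarrow> nat \<Rightarrow> real) \<Rightarrow> ((nat \<Rightarrow> real) \<Rightarrow> 'b)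
    \<Rightarrow> (nat \<Rightarrow> 'x \<times> 'y) \<Rightarrow> nat set \<Rightarrow> real" where
  "emp_loss l ph g D J = (\<Sum>i\<in>J. l (snd (D i)) (g (ph (fst (D i))))) / real (card J)"

definition gauss0 :: "real \<Rightarrow> real measure" where
  "gauss0 v = (if v > 0 then density lborel (normal_density 0 (sqrt v)) else return borel 0)"

end

theory Submission
  imports Defs
begin

(*
  Write the held-out loss of a fitted rule as the loss of the oracle rule gstar plus an excess.
  In the oracle part the averages over Io cancel between the two arms of the statistic, leaving
  (1 - tau) times the difference of the averages over Ia and Ib: these index sets are disjoint and
  of equal size, so after normalisation the central limit theorem yields N(0, 2 (1 - tau) sigma^2).
  The excess part is handled conditionally on the training folds.  Its centred held-out averages
  are o_P(n^(-1/2)) by Chebyshev's inequality and (C3); its conditional mean, the bias, is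
  O(norm (ghat o phihat - gstar)^2) = o_P(n^(-1/2)) by (C1) and (C2).  Slutsky's lemma concludes.
*)

section \<open>Convergence in probability to zero\<close>

abbreviation oP1 :: "'a measure \<Rightarrow> (nat \<Rightarrow> 'a \<Rightarrow> real) \<Rightarrow> bool" where
  "oP1 M W \<equiv> small_oP M W (\<lambda>_. 1)"

lemma oP1_iff:
  "oP1 M W \<longleftrightarrow> (\<forall>n. W n \<in> borel_measurable M) \<and>
     (\<forall>e>0. (\<lambda>n. measure M {\<omega>\<in>space M. e < \<bar>W n \<omega>\<bar>}) \<longlonglongrightarrow> 0)"
  by (simp add: small_oP_def)

lemma oP1I:
  assumes "\<And>n. W n \<in> borel_measurable M"
    and "\<And>e \<eta>. e > 0 \<Longrightarrow> \<eta> > 0 \<Longrightarrow>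
      eventually (\<lambda>n. measure M {\<omega>\<in>space M. e < \<bar>W n \<omega>\<bar>} \<le> \<eta>) sequentially"
  shows "oP1 M W"
  unfolding oP1_iff
proof (intro conjI allI impI assms)
  fix e :: real assume "e > 0"
  show "(\<lambda>n. measure M {\<omega>\<in>space M. e < \<bar>W n \<omega>\<bar>}) \<longlonglongrightarrow> 0"
  proof (rule tendstoI)
    fix \<eta> :: real assume "\<eta> > 0"
    from assms(2)[OF \<open>e > 0\<close>, of "\<eta>/2"] \<open>\<eta> > 0\<close>
    show "eventually (\<lambda>n. dist (measure M {\<omega>\<in>space M. e < \<bar>W n \<omega>\<bar>}) 0 < \<eta>) sequentially"
      by (auto elim!: eventually_mono simp: dist_real_def)
  qed
qed

lemma oP1_measurable: "oP1 M W \<Longrightarrow> W n \<in> borel_measurable M"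
  unfolding oP1_iff by auto

lemma oP1_eventually_less:
  "oP1 M W \<Longrightarrow> e > 0 \<Longrightarrow> \<eta> > 0 \<Longrightarrow>
    eventually (\<lambda>n. measure M {\<omega>\<in>space M. e < \<bar>W n \<omega>\<bar>} < \<eta>) sequentially"
  unfolding oP1_iff by (auto dest!: spec[of _ e] dest: order_tendstoD(2)[of _ 0 _ \<eta>])

lemma oP1_zero: "oP1 M (\<lambda>n \<omega>. 0)"
  by (rule oP1I) auto

lemma oP1_cong:
  assumes "oP1 M W" "\<And>n \<omega>. \<omega> \<in> space M \<Longrightarrow> W n \<omega> = V n \<omega>"
  shows "oP1 M V"
proof -
  have "V n \<in> borel_measurable M" for n
    using oP1_measurable[OF assms(1)] measurable_cong[of M "W n" "V n"] assms(2) by metis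
  moreover have "{\<omega>\<in>space M. e < \<bar>W n \<omega>\<bar>} = {\<omega>\<in>space M. e < \<bar>V n \<omega>\<bar>}" for e n
    using assms(2) by auto
  ultimately show ?thesis using assms(1) unfolding oP1_iff by simp
qed

lemma oP1_dominated_outside:
  assumes "finite_measure M" "oP1 M A" and [measurable]: "\<And>n. B n \<in> borel_measurable M"
    and [measurable]: "\<And>n. {\<omega>\<in>space M. Q n \<omega>} \<in> sets M"
    and Q: "(\<lambda>n. measure M {\<omega>\<in>space M. Q n \<omega>}) \<longlonglongrightarrow> 0"
    and le: "\<And>n \<omega>. \<omega> \<in> space M \<Longrightarrow> \<not> Q n \<omega> \<Longrightarrow> \<bar>B n \<omega>\<bar> \<le> \<bar>A n \<omega>\<bar>"
  shows "oP1 M B"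
proof (rule oP1I)
  interpret finite_measure M by fact
  have [measurable]: "A n \<in> borel_measurable M" for n
    using oP1_measurable[OF assms(2)] .
  fix e \<eta> :: real assume "e > 0" "\<eta> > 0"
  then have "eventually (\<lambda>n. measure M {\<omega>\<in>space M. e < \<bar>A n \<omega>\<bar>} < \<eta>/2) sequentially"
    "eventually (\<lambda>n. measure M {\<omega>\<in>space M. Q n \<omega>} < \<eta>/2) sequentially"
    using oP1_eventually_less[OF assms(2), of e "\<eta>/2"] order_tendstoD(2)[OF Q, of "\<eta>/2"] by auto
  then show "eventually (\<lambda>n. measure M {\<omega>\<in>space M. e < \<bar>B n \<omega>\<bar>} \<le> \<eta>) sequentially"
  proof eventually_elim
    case (elim n)
    moreover have "measure M {\<omega>\<in>space M. e < \<bar>B n \<omega>\<bar>}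
        \<le> measure M ({\<omega>\<in>space M. e < \<bar>A n \<omega>\<bar>} \<union> {\<omega>\<in>space M. Q n \<omega>})"
      using le by (intro finite_measure_mono) (auto intro: less_le_trans)
    moreover have "measure M ({\<omega>\<in>space M. e < \<bar>A n \<omega>\<bar>} \<union> {\<omega>\<in>space M. Q n \<omega>})
        \<le> measure M {\<omega>\<in>space M. e < \<bar>A n \<omega>\<bar>} + measure M {\<omega>\<in>space M. Q n \<omega>}"
      by (rule measure_Un_le) auto
    ultimately show "measure M {\<omega>\<in>space M. e < \<bar>B n \<omega>\<bar>} \<le> \<eta>"
      by linarith
  qed
qed simp

lemma oP1_dominated:
  assumes "finite_measure M" "oP1 M A" and [measurable]: "\<And>n. B n \<in> borel_measurable M"
    and "\<And>n \<omega>. \<omega> \<in> space M \<Longrightarrow> \<bar>B n \<omega>\<bar> \<le> \<bar>A n \<omega>\<bar>"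
  shows "oP1 M B"
  by (rule oP1_dominated_outside[where Q="\<lambda>_ _. False"]) (use assms in auto)

lemma oP1_add:
  assumes "finite_measure M" "oP1 M A" "oP1 M B"
  shows "oP1 M (\<lambda>n \<omega>. A n \<omega> + B n \<omega>)"
proof (rule oP1I)
  interpret finite_measure M by fact
  have [measurable]: "A n \<in> borel_measurable M" "B n \<in> borel_measurable M" for n
    using assms oP1_measurable by auto
  show "(\<lambda>\<omega>. A n \<omega> + B n \<omega>) \<in> borel_measurable M" for n by simp
  fix e \<eta> :: real assume "e > 0" "\<eta> > 0"
  then have "eventually (\<lambda>n. measure M {\<omega>\<in>space M. e/2 < \<bar>A n \<omega>\<bar>} < \<eta>/2) sequentially"
    "eventually (\<lambda>n. measure M {\<omega>\<in>space M. e/2 < \<bar>B n \<omega>\<bar>} < \<eta>/2) sequentially"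
    using oP1_eventually_less[OF assms(2), of "e/2" "\<eta>/2"]
      oP1_eventually_less[OF assms(3), of "e/2" "\<eta>/2"] by auto
  then show "eventually (\<lambda>n. measure M {\<omega>\<in>space M. e < \<bar>A n \<omega> + B n \<omega>\<bar>} \<le> \<eta>) sequentially"
  proof eventually_elim
    case (elim n)
    have "measure M {\<omega>\<in>space M. e < \<bar>A n \<omega> + B n \<omega>\<bar>}
        \<le> measure M ({\<omega>\<in>space M. e/2 < \<bar>A n \<omega>\<bar>} \<union> {\<omega>\<in>space M. e/2 < \<bar>B n \<omega>\<bar>})"
      by (rule finite_measure_mono) auto
    also have "\<dots> \<le> measure M {\<omega>\<in>space M. e/2 < \<bar>A n \<omega>\<bar>} + measure M {\<omega>\<in>space M. e/2 < \<bar>B n \<omega>\<bar>}"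
      by (rule measure_Un_le) auto
    finally show ?case using elim by simp
  qed
qed

lemma oP1_sum:
  assumes "finite_measure M" "finite S" "\<And>s. s \<in> S \<Longrightarrow> oP1 M (F s)"
  shows "oP1 M (\<lambda>n \<omega>. \<Sum>s\<in>S. F s n \<omega>)"
  using assms(2,3)
proof (induction S rule: finite_induct)
  case empty
  then show ?case by (simp add: oP1_zero)
next
  case (insert x S)
  then show ?case using oP1_add[OF assms(1), of "F x" "\<lambda>n \<omega>. \<Sum>s\<in>S. F s n \<omega>"] by simp
qed

lemma oP1_cmult:
  assumes "oP1 M A"
  shows "oP1 M (\<lambda>n \<omega>. c * A n \<omega>)"
proof (cases "c = 0")
  case True
  then show ?thesis using oP1_zero by simp
next
  case False
  have [measurable]: "A n \<in> borel_measurable M" for n using assms oP1_measurable by auto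
  show ?thesis
  proof (rule oP1I)
    fix e \<eta> :: real assume "e > 0" "\<eta> > 0"
    then have "eventually (\<lambda>n. measure M {\<omega>\<in>space M. e/\<bar>c\<bar> < \<bar>A n \<omega>\<bar>} < \<eta>) sequentially"
      using oP1_eventually_less[OF assms] False by simp
    moreover have "{\<omega>\<in>space M. e/\<bar>c\<bar> < \<bar>A n \<omega>\<bar>} = {\<omega>\<in>space M. e < \<bar>c * A n \<omega>\<bar>}" for n
      using False by (auto simp: abs_mult field_simps)
    ultimately show "eventually (\<lambda>n. measure M {\<omega>\<in>space M. e < \<bar>c * A n \<omega>\<bar>} \<le> \<eta>) sequentially"
      by (auto elim: eventually_mono)
  qed simp
qed

lemma (in prob_space) prob_abs_greater_le_second_moment:
  assumes [measurable]: "f \<in> borel_measurable M" and "integrable M (\<lambda>x. (f x)\<^sup>2)" and "e > 0"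
  shows "prob {x\<in>space M. e < \<bar>f x\<bar>} \<le> (\<integral>x. (f x)\<^sup>2 \<partial>M) / e\<^sup>2"
proof -
  have "prob {x\<in>space M. e < \<bar>f x\<bar>} \<le> prob {x\<in>space M. (f x)\<^sup>2 \<ge> e\<^sup>2}"
    using \<open>e > 0\<close> by (intro finite_measure_mono)
      (auto simp: abs_le_square_iff[symmetric] intro: less_imp_le)
  also have "\<dots> \<le> (\<integral>x. (f x)\<^sup>2 \<partial>M) / e\<^sup>2"
    by (rule integral_Markov_inequality_measure) (use assms in auto)
  finally show ?thesis .
qed

lemma oP1_if_second_moment_tendsto_0:
  assumes "prob_space M" and [measurable]: "\<And>n. W n \<in> borel_measurable M"
    and int: "\<And>n. integrable M (\<lambda>x. (W n x)\<^sup>2)"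
    and lim: "(\<lambda>n. \<integral>x. (W n x)\<^sup>2 \<partial>M) \<longlonglongrightarrow> 0"
  shows "oP1 M W"
proof (rule oP1I)
  interpret prob_space M by fact
  fix e \<eta> :: real assume e: "e > 0" and \<eta>: "\<eta> > 0"
  have "eventually (\<lambda>n. (\<integral>x. (W n x)\<^sup>2 \<partial>M) < \<eta> * e\<^sup>2) sequentially"
    using order_tendstoD(2)[OF lim, of "\<eta> * e\<^sup>2"] e \<eta> by simp
  then show "eventually (\<lambda>n. measure M {\<omega>\<in>space M. e < \<bar>W n \<omega>\<bar>} \<le> \<eta>) sequentially"
  proof eventually_elim
    case (elim n)
    have "measure M {\<omega>\<in>space M. e < \<bar>W n \<omega>\<bar>} \<le> (\<integral>x. (W n x)\<^sup>2 \<partial>M) / e\<^sup>2"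
      by (rule prob_abs_greater_le_second_moment) (use int e in auto)
    also have "\<dots> \<le> \<eta>" using elim e by (simp add: divide_le_eq)
    finally show ?case .
  qed
qed simp

lemma (in prob_space) cdf_distr:
  assumes [measurable]: "f \<in> borel_measurable M"
  shows "cdf (distr M borel f) y = prob {\<omega>\<in>space M. f \<omega> \<le> y}"
  unfolding cdf_def by (subst measure_distr) (auto intro!: arg_cong[where f=prob])

lemma real_distribution_continuity_point_between:
  assumes "real_distribution L" "a < b"
  shows "\<exists>y. a < y \<and> y < b \<and> isCont (cdf L) y"
proof -
  interpret real_distribution L by fact
  have "uncountable {a<..<b}" using assms(2) uncountable_open_interval by blast
  then have "\<not> {a<..<b} \<subseteq> {x. measure L {x} > 0}"
    using countable_atoms countable_subset by blast
  then obtain y where "y \<in> {a<..<b}" "y \<notin> {x. measure L {x} > 0}" by blast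
  moreover have "measure L {y} \<ge> 0" by simp
  ultimately show ?thesis using isCont_cdf[of y] by (intro exI[of _ y]) auto
qed

lemma (in prob_space) prob_add_le_bounds:
  fixes A B :: "'a \<Rightarrow> real"
  assumes [measurable]: "A \<in> borel_measurable M" "B \<in> borel_measurable M"
  shows "prob {\<omega>\<in>space M. A \<omega> + B \<omega> \<le> x} \<le> prob {\<omega>\<in>space M. A \<omega> \<le> u} + prob {\<omega>\<in>space M. u - x < \<bar>B \<omega>\<bar>}"
    and "prob {\<omega>\<in>space M. A \<omega> \<le> l} \<le> prob {\<omega>\<in>space M. A \<omega> + B \<omega> \<le> x} + prob {\<omega>\<in>space M. x - l < \<bar>B \<omega>\<bar>}"
proof -
  have "prob {\<omega>\<in>space M. A \<omega> + B \<omega> \<le> x} \<le> prob ({\<omega>\<in>space M. A \<omega> \<le> u} \<union> {\<omega>\<in>space M. u - x < \<bar>B \<omega>\<bar>})"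
    by (rule finite_measure_mono) auto
  also have "\<dots> \<le> prob {\<omega>\<in>space M. A \<omega> \<le> u} + prob {\<omega>\<in>space M. u - x < \<bar>B \<omega>\<bar>}"
    by (rule measure_Un_le) auto
  finally show "prob {\<omega>\<in>space M. A \<omega> + B \<omega> \<le> x} \<le> prob {\<omega>\<in>space M. A \<omega> \<le> u} + prob {\<omega>\<in>space M. u - x < \<bar>B \<omega>\<bar>}" .
  have "prob {\<omega>\<in>space M. A \<omega> \<le> l} \<le> prob ({\<omega>\<in>space M. A \<omega> + B \<omega> \<le> x} \<union> {\<omega>\<in>space M. x - l < \<bar>B \<omega>\<bar>})"
    by (rule finite_measure_mono) auto
  also have "\<dots> \<le> prob {\<omega>\<in>space M. A \<omega> + B \<omega> \<le> x} + prob {\<omega>\<in>space M. x - l < \<bar>B \<omega>\<bar>}"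
    by (rule measure_Un_le) auto
  finally show "prob {\<omega>\<in>space M. A \<omega> \<le> l} \<le> prob {\<omega>\<in>space M. A \<omega> + B \<omega> \<le> x} + prob {\<omega>\<in>space M. x - l < \<bar>B \<omega>\<bar>}" .
qed

lemma (in prob_space) weak_conv_m_add_oP1:
  assumes [measurable]: "\<And>n. A n \<in> borel_measurable M"
    and wc: "weak_conv_m (\<lambda>n. distr M borel (A n)) L"
    and L: "real_distribution L"
    and B: "oP1 M B"
  shows "weak_conv_m (\<lambda>n. distr M borel (\<lambda>\<omega>. A n \<omega> + B n \<omega>)) L"
  unfolding weak_conv_m_def weak_conv_def
proof (intro allI impI)
  have [measurable]: "B n \<in> borel_measurable M" for n using B oP1_measurable by auto
  fix x assume cont: "isCont (cdf L) x"
  let ?F = "cdf L"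
  let ?G = "\<lambda>n. prob {\<omega>\<in>space M. A n \<omega> + B n \<omega> \<le> x}"
  let ?FA = "\<lambda>n y. prob {\<omega>\<in>space M. A n \<omega> \<le> y}"
  have FA: "(\<lambda>n. ?FA n y) \<longlonglongrightarrow> ?F y" if "isCont ?F y" for y
    using wc that unfolding weak_conv_m_def weak_conv_def by (simp add: cdf_distr)
  have "?G \<longlonglongrightarrow> ?F x"
  proof (rule tendstoI)
    fix \<eta> :: real assume \<eta>: "\<eta> > 0"
    from cont[unfolded isCont_def, THEN LIM_D, of "\<eta>/2"] \<eta>
    obtain e where e: "e > 0" and ee: "\<And>y. y \<noteq> x \<Longrightarrow> dist y x < e \<Longrightarrow> dist (?F y) (?F x) < \<eta>/2"
      by (force simp: dist_real_def)
    obtain y1 where y1: "x < y1" "y1 < x + e" "isCont ?F y1"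
      using real_distribution_continuity_point_between[OF L, of x "x+e"] e by auto
    obtain y0 where y0: "x - e < y0" "y0 < x" "isCont ?F y0"
      using real_distribution_continuity_point_between[OF L, of "x-e" x] e by auto
    have F1: "?F y1 < ?F x + \<eta>/2" using ee[of y1] y1 unfolding dist_real_def by (smt (verit))
    have F0: "?F y0 > ?F x - \<eta>/2" using ee[of y0] y0 unfolding dist_real_def by (smt (verit))
    have ev1: "eventually (\<lambda>n. ?FA n y1 < ?F y1 + \<eta>/4) sequentially"
      using order_tendstoD(2)[OF FA[OF y1(3)]] \<eta> by simp
    have ev0: "eventually (\<lambda>n. ?FA n y0 > ?F y0 - \<eta>/4) sequentially"
      using order_tendstoD(1)[OF FA[OF y0(3)]] \<eta> by simp
    have evB1: "eventually (\<lambda>n. prob {\<omega>\<in>space M. y1 - x < \<bar>B n \<omega>\<bar>} < \<eta>/4) sequentially"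
      by (rule oP1_eventually_less[OF B]) (use y1 \<eta> in auto)
    have evB0: "eventually (\<lambda>n. prob {\<omega>\<in>space M. x - y0 < \<bar>B n \<omega>\<bar>} < \<eta>/4) sequentially"
      by (rule oP1_eventually_less[OF B]) (use y0 \<eta> in auto)
    from ev1 ev0 evB1 evB0
    show "eventually (\<lambda>n. dist (?G n) (?F x) < \<eta>) sequentially"
    proof eventually_elim
      case (elim n)
      then show ?case
        using prob_add_le_bounds(1)[of "A n" "B n" x y1] prob_add_le_bounds(2)[of "A n" "B n" y0 x] F0 F1
        by (simp add: dist_real_def abs_less_iff)
    qed
  qed
  then show "(\<lambda>n. cdf (distr M borel (\<lambda>\<omega>. A n \<omega> + B n \<omega>)) x) \<longlonglongrightarrow> cdf L x"
    by (simp add: cdf_distr)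
qed

section \<open>Sums of centred i.i.d. variables\<close>

lemma (in prob_space) square_add_indep:
  fixes X Y :: "'a \<Rightarrow> real"
  assumes ind: "indep_var borel X borel Y"
    and X: "integrable M (\<lambda>\<omega>. (X \<omega>)\<^sup>2)" and Y: "integrable M (\<lambda>\<omega>. (Y \<omega>)\<^sup>2)"
    and mean: "expectation X = 0"
  shows "integrable M (\<lambda>\<omega>. (X \<omega> + Y \<omega>)\<^sup>2)"
    and "expectation (\<lambda>\<omega>. (X \<omega> + Y \<omega>)\<^sup>2) = expectation (\<lambda>\<omega>. (X \<omega>)\<^sup>2) + expectation (\<lambda>\<omega>. (Y \<omega>)\<^sup>2)"
proof -
  have [measurable]: "X \<in> borel_measurable M" "Y \<in> borel_measurable M"
    using ind by (auto intro: indep_var_rv1 indep_var_rv2)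
  have "integrable M X" "integrable M Y"
    by (rule square_integrable_imp_integrable[OF _ X] square_integrable_imp_integrable[OF _ Y], simp)+
  then have XY: "integrable M (\<lambda>\<omega>. 2 * (X \<omega> * Y \<omega>))" "expectation (\<lambda>\<omega>. 2 * (X \<omega> * Y \<omega>)) = 0"
    using indep_var_integrable[OF ind] indep_var_lebesgue_integral[OF ind] mean by auto
  have eq: "(\<lambda>\<omega>. (X \<omega> + Y \<omega>)\<^sup>2) = (\<lambda>\<omega>. (X \<omega>)\<^sup>2 + 2 * (X \<omega> * Y \<omega>) + (Y \<omega>)\<^sup>2)"
    by (simp add: power2_sum ac_simps)
  show "integrable M (\<lambda>\<omega>. (X \<omega> + Y \<omega>)\<^sup>2)"
    unfolding eq using X XY(1) Y by simp
  show "expectation (\<lambda>\<omega>. (X \<omega> + Y \<omega>)\<^sup>2) = expectation (\<lambda>\<omega>. (X \<omega>)\<^sup>2) + expectation (\<lambda>\<omega>. (Y \<omega>)\<^sup>2)"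
    unfolding eq using X XY Y by simp
qed

lemma (in prob_space) integral_square_sum_indep:
  fixes X :: "'i \<Rightarrow> 'a \<Rightarrow> real"
  assumes "finite J" "indep_vars (\<lambda>_. borel) X J"
    and "\<And>i. i \<in> J \<Longrightarrow> integrable M (\<lambda>\<omega>. (X i \<omega>)\<^sup>2)"
    and "\<And>i. i \<in> J \<Longrightarrow> expectation (X i) = 0"
  shows "integrable M (\<lambda>\<omega>. (\<Sum>i\<in>J. X i \<omega>)\<^sup>2) \<and>
         expectation (\<lambda>\<omega>. (\<Sum>i\<in>J. X i \<omega>)\<^sup>2) = (\<Sum>i\<in>J. expectation (\<lambda>\<omega>. (X i \<omega>)\<^sup>2))"
  using assms
proof (induction J rule: finite_induct)
  case (insert x F)
  have "indep_vars (\<lambda>_. borel) X F"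
    using insert(4) by (rule indep_vars_subset) auto
  with insert have IH: "integrable M (\<lambda>\<omega>. (\<Sum>i\<in>F. X i \<omega>)\<^sup>2)"
    "expectation (\<lambda>\<omega>. (\<Sum>i\<in>F. X i \<omega>)\<^sup>2) = (\<Sum>i\<in>F. expectation (\<lambda>\<omega>. (X i \<omega>)\<^sup>2))"
    by auto
  have "indep_var borel (X x) borel (\<lambda>\<omega>. \<Sum>i\<in>F. X i \<omega>)"
    using insert(1,2,4) by (rule indep_vars_sum)
  from square_add_indep[OF this _ IH(1)] insert(1,2,5,6) IH(2) show ?case
    by simp
qed simp

definition sign_in :: "nat set \<Rightarrow> nat \<Rightarrow> real" where
  "sign_in A i = (if i \<in> A then 1 else -1)"

lemma sum_diff_eq_sum_sign_in:
  assumes "finite A" "finite B" "A \<inter> B = {}"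
  shows "(\<Sum>i\<in>A. f i) - (\<Sum>i\<in>B. f i) = (\<Sum>i\<in>A \<union> B. sign_in A i * f i)"
proof -
  have "(\<Sum>i\<in>A \<union> B. sign_in A i * f i) = (\<Sum>i\<in>A. sign_in A i * f i) + (\<Sum>i\<in>B. sign_in A i * f i)"
    using assms by (rule sum.union_disjoint)
  also have "(\<Sum>i\<in>A. sign_in A i * f i) = (\<Sum>i\<in>A. f i)"
    by (rule sum.cong) (auto simp: sign_in_def)
  also have "(\<Sum>i\<in>B. sign_in A i * f i) = - (\<Sum>i\<in>B. f i)"
    using assms(3) by (auto simp: sign_in_def sum_negf[symmetric] intro!: sum.cong)
  finally show ?thesis by simp
qed

lemma sum_UN_disjoint_family_THE:
  assumes "\<And>k. k \<in> KK \<Longrightarrow> finite (S k)" and "finite KK" and dj: "disjoint_family_on S KK"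
  shows "(\<Sum>k\<in>KK. \<Sum>i\<in>S k. f k i) = (\<Sum>i\<in>(\<Union>k\<in>KK. S k). f (THE k. k \<in> KK \<and> i \<in> S k) i)"
proof -
  have "(\<Sum>i\<in>(\<Union>k\<in>KK. S k). f (THE k. k \<in> KK \<and> i \<in> S k) i) = (\<Sum>k\<in>KK. \<Sum>i\<in>S k. f (THE k. k \<in> KK \<and> i \<in> S k) i)"
    by (rule sum.UNION_disjoint_family) (use assms in auto)
  also have "\<dots> = (\<Sum>k\<in>KK. \<Sum>i\<in>S k. f k i)"
  proof (intro sum.cong refl)
    fix k i assume k: "k \<in> KK" and i: "i \<in> S k"
    have "(THE k. k \<in> KK \<and> i \<in> S k) = k"
      using dj k i by (intro the_equality) (auto simp: disjoint_family_on_def)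
    then show "f (THE k. k \<in> KK \<and> i \<in> S k) i = f k i" by simp
  qed
  finally show ?thesis by simp
qed

lemma real_distribution_gauss0: "real_distribution (gauss0 v)"
proof (cases "v > 0")
  case True
  have "gauss0 v = density lborel (normal_density 0 (sqrt v))" using True by (simp add: gauss0_def)
  then show ?thesis
    using True by (simp add: real_distribution_def real_distribution_axioms_def prob_space_normal_density)
next
  case False
  then show ?thesis unfolding gauss0_def
    by (simp add: real_distribution_def real_distribution_axioms_def prob_space_return)
qed

lemma char_gauss0:
  assumes "v > 0"
  shows "char (gauss0 v) t = char std_normal_distribution (sqrt v * t)"
proof -
  interpret S: prob_space std_normal_distribution
    using real_dist_normal_dist real_distribution_def by blast
  have d0: "distributed std_normal_distribution lborel (\<lambda>x. x) (normal_density 0 1)"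
    unfolding distributed_def by (simp add: distr_id2)
  have "distributed std_normal_distribution lborel (\<lambda>x. 0 + sqrt v * x)
      (normal_density (0 + sqrt v * 0) (\<bar>sqrt v\<bar> * 1))"
    by (rule S.normal_density_affine[OF d0]) (use assms in auto)
  then have eq: "distr std_normal_distribution lborel (\<lambda>x. sqrt v * x) = gauss0 v"
    using assms by (simp add: distributed_def gauss0_def)
  have [measurable]: "(\<lambda>x::real. sqrt v * x) \<in> measurable std_normal_distribution lborel"
    by simp
  have "char (gauss0 v) t = (CLINT x|distr std_normal_distribution lborel (\<lambda>x. sqrt v * x). iexp (t * x))"
    by (simp add: char_def eq)
  also have "\<dots> = (CLINT x|std_normal_distribution. iexp (t * (sqrt v * x)))"
    by (rule integral_distr) auto
  also have "\<dots> = char std_normal_distribution (sqrt v * t)"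
    by (simp add: char_def ac_simps)
  finally show ?thesis .
qed

locale iid_centered = prob_space +
  fixes \<zeta> :: "nat \<Rightarrow> 'a \<Rightarrow> real" and s2 :: real and law :: "real measure"
  assumes indep_\<zeta>: "indep_vars (\<lambda>_. borel) \<zeta> UNIV"
    and square_integrable_\<zeta>: "\<And>i. integrable M (\<lambda>\<omega>. (\<zeta> i \<omega>)\<^sup>2)"
    and mean_\<zeta>: "\<And>i. expectation (\<zeta> i) = 0"
    and second_moment_\<zeta>: "\<And>i. expectation (\<lambda>\<omega>. (\<zeta> i \<omega>)\<^sup>2) = s2"
    and distr_\<zeta>: "\<And>i. distr M borel (\<zeta> i) = law"
begin

lemma measurable_\<zeta>[measurable]: "\<zeta> i \<in> borel_measurable M"
  using indep_\<zeta> unfolding indep_vars_def by auto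

lemma integrable_\<zeta>: "integrable M (\<zeta> i)"
  by (rule square_integrable_imp_integrable[OF measurable_\<zeta> square_integrable_\<zeta>])

lemma s2_nonneg: "s2 \<ge> 0"
  using second_moment_\<zeta>[of 0] by (metis integral_nonneg_AE AE_I2 zero_le_power2)

lemma square_lincomb:
  assumes "finite J"
  shows "integrable M (\<lambda>\<omega>. (\<Sum>i\<in>J. c i * \<zeta> i \<omega>)\<^sup>2)"
    and "expectation (\<lambda>\<omega>. (\<Sum>i\<in>J. c i * \<zeta> i \<omega>)\<^sup>2) = (\<Sum>i\<in>J. (c i)\<^sup>2) * s2"
proof -
  have ind: "indep_vars (\<lambda>_. borel) (\<lambda>i \<omega>. c i * \<zeta> i \<omega>) J"
    by (rule indep_vars_compose2[where X=\<zeta>, OF indep_vars_subset[OF indep_\<zeta>]]) auto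
  have "integrable M (\<lambda>\<omega>. (c i * \<zeta> i \<omega>)\<^sup>2)" for i
    using square_integrable_\<zeta>[of i] by (simp add: power_mult_distrib)
  moreover have "expectation (\<lambda>\<omega>. c i * \<zeta> i \<omega>) = 0" for i
    using mean_\<zeta>[of i] by simp
  moreover have "expectation (\<lambda>\<omega>. (c i * \<zeta> i \<omega>)\<^sup>2) = (c i)\<^sup>2 * s2" for i
    using second_moment_\<zeta>[of i] by (simp add: power_mult_distrib)
  ultimately have "integrable M (\<lambda>\<omega>. (\<Sum>i\<in>J. c i * \<zeta> i \<omega>)\<^sup>2) \<and>
         expectation (\<lambda>\<omega>. (\<Sum>i\<in>J. c i * \<zeta> i \<omega>)\<^sup>2) = (\<Sum>i\<in>J. (c i)\<^sup>2 * s2)"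
    using integral_square_sum_indep[OF assms ind] by simp
  then show "integrable M (\<lambda>\<omega>. (\<Sum>i\<in>J. c i * \<zeta> i \<omega>)\<^sup>2)"
    and "expectation (\<lambda>\<omega>. (\<Sum>i\<in>J. c i * \<zeta> i \<omega>)\<^sup>2) = (\<Sum>i\<in>J. (c i)\<^sup>2) * s2"
    by (auto simp: sum_distrib_right)
qed

lemma char_distr_lincomb:
  assumes "finite J"
  shows "char (distr M borel (\<lambda>\<omega>. \<Sum>i\<in>J. c i * \<zeta> i \<omega>)) t = (\<Prod>i\<in>J. char law (c i * t))"
proof -
  have ind: "indep_vars (\<lambda>_. borel) (\<lambda>i \<omega>. c i * \<zeta> i \<omega>) J"
    by (rule indep_vars_compose2[where X=\<zeta>, OF indep_vars_subset[OF indep_\<zeta>]]) auto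
  have "char (distr M borel (\<lambda>\<omega>. \<Sum>i\<in>J. c i * \<zeta> i \<omega>)) t =
     (\<Prod>i\<in>J. char (distr M borel (\<lambda>\<omega>. c i * \<zeta> i \<omega>)) t)"
    by (rule char_distr_sum[OF ind])
  also have "\<dots> = (\<Prod>i\<in>J. char law (c i * t))"
  proof (rule prod.cong)
    fix i
    have "char (distr M borel (\<lambda>\<omega>. c i * \<zeta> i \<omega>)) t = (CLINT \<omega>|M. iexp (t * (c i * \<zeta> i \<omega>)))"
      by (simp add: char_def integral_distr)
    also have "\<dots> = (CLINT \<omega>|M. iexp ((c i * t) * \<zeta> i \<omega>))"
      by (simp add: ac_simps)
    also have "\<dots> = char (distr M borel (\<zeta> i)) (c i * t)"
      by (simp add: char_def integral_distr)
    finally show "char (distr M borel (\<lambda>\<omega>. c i * \<zeta> i \<omega>)) t = char law (c i * t)"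
      by (simp add: distr_\<zeta>)
  qed simp
  finally show ?thesis .
qed

lemma char_distr_sum_diff:
  assumes "finite A" "finite B" "A \<inter> B = {}"
  shows "char (distr M borel (\<lambda>\<omega>. ((\<Sum>i\<in>A. \<zeta> i \<omega>) - (\<Sum>i\<in>B. \<zeta> i \<omega>)) * r)) t
       = char law (r * t) ^ card A * char law (- r * t) ^ card B"
proof -
  have "(\<lambda>\<omega>. ((\<Sum>i\<in>A. \<zeta> i \<omega>) - (\<Sum>i\<in>B. \<zeta> i \<omega>)) * r) = (\<lambda>\<omega>. \<Sum>i\<in>A \<union> B. (sign_in A i * r) * \<zeta> i \<omega>)"
    using sum_diff_eq_sum_sign_in[OF assms, of "\<lambda>i. \<zeta> i _"]
    by (auto simp: sum_distrib_left sum_distrib_right ac_simps)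
  then have "char (distr M borel (\<lambda>\<omega>. ((\<Sum>i\<in>A. \<zeta> i \<omega>) - (\<Sum>i\<in>B. \<zeta> i \<omega>)) * r)) t
     = (\<Prod>i\<in>A \<union> B. char law (sign_in A i * r * t))"
    using char_distr_lincomb[of "A \<union> B" "\<lambda>i. sign_in A i * r" t] assms by simp
  also have "\<dots> = (\<Prod>i\<in>A. char law (sign_in A i * r * t)) * (\<Prod>i\<in>B. char law (sign_in A i * r * t))"
    using assms by (rule prod.union_disjoint)
  also have "(\<Prod>i\<in>A. char law (sign_in A i * r * t)) = char law (r * t) ^ card A"
    by (simp add: sign_in_def)
  also have "(\<Prod>i\<in>B. char law (sign_in A i * r * t)) = char law (- r * t) ^ card B"
    using assms(3) by (subst prod.cong[OF refl, of _ _ "\<lambda>_. char law (- r * t)"]) (auto simp: sign_in_def)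
  finally show ?thesis .
qed

text \<open>A balanced difference \<open>(\<Sum>i\<in>A. \<zeta> i) - (\<Sum>i\<in>B. \<zeta> i)\<close> is not a sum of identically
  distributed terms, but its characteristic function depends only on \<open>card A = card B = m\<close>; hence
  it is that of the sum of the \<open>m\<close> i.i.d. differences \<open>\<zeta> (2*j) - \<zeta> (2*j+1)\<close>, to which the
  central limit theorem of the library applies.\<close>

definition pair_diff :: "nat \<Rightarrow> 'a \<Rightarrow> real" where
  "pair_diff j \<omega> = \<zeta> (2*j) \<omega> - \<zeta> (2*j+1) \<omega>"

lemma measurable_pair_diff[measurable]: "pair_diff j \<in> borel_measurable M"
  unfolding pair_diff_def by measurable

lemma pair_diff_eq_lincomb: "pair_diff j \<omega> = (\<Sum>i\<in>{2*j, 2*j+1}. sign_in {2*j} i * \<zeta> i \<omega>)"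
  by (simp add: pair_diff_def sign_in_def)

lemma indep_vars_pair_diff: "indep_vars (\<lambda>_. borel) pair_diff UNIV"
proof -
  let ?K = "\<lambda>j::nat. {2*j, 2*j+1}"
  have dj: "disjoint_family_on ?K UNIV"
    unfolding disjoint_family_on_def by auto
  have "indep_vars (\<lambda>j. PiM (?K j) (\<lambda>_. borel)) (\<lambda>j \<omega>. restrict (\<lambda>i. \<zeta> i \<omega>) (?K j)) UNIV"
    by (rule indep_vars_restrict[OF indep_\<zeta> _ dj]) auto
  then have "indep_vars (\<lambda>_. borel) (\<lambda>j \<omega>. (\<lambda>f. f (2*j) - f (2*j+1)) (restrict (\<lambda>i. \<zeta> i \<omega>) (?K j))) UNIV"
    by (rule indep_vars_compose2) auto
  then show ?thesis by (simp add: pair_diff_def[abs_def])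
qed

lemma char_distr_pair_diff: "char (distr M borel (pair_diff j)) t = char law t * char law (- t)"
proof -
  have "pair_diff j = (\<lambda>\<omega>. ((\<Sum>i\<in>{2*j}. \<zeta> i \<omega>) - (\<Sum>i\<in>{2*j+1}. \<zeta> i \<omega>)) * 1)"
    by (auto simp: pair_diff_def)
  then show ?thesis using char_distr_sum_diff[of "{2*j}" "{2*j+1}" 1 t] by simp
qed

lemma distr_pair_diff: "distr M borel (pair_diff j) = distr M borel (pair_diff 0)"
proof (rule Levy_uniqueness)
  show "real_distribution (distr M borel (pair_diff j))" "real_distribution (distr M borel (pair_diff 0))"
    by (auto intro!: real_distribution_distr)
  show "char (distr M borel (pair_diff j)) = char (distr M borel (pair_diff 0))"
    by (rule ext) (simp add: char_distr_pair_diff)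
qed

lemma square_pair_diff: "integrable M (\<lambda>\<omega>. (pair_diff j \<omega>)\<^sup>2)" "expectation (\<lambda>\<omega>. (pair_diff j \<omega>)\<^sup>2) = 2 * s2"
  using square_lincomb[of "{2*j, 2*j+1}" "sign_in {2*j}"] by (auto simp: pair_diff_eq_lincomb sign_in_def)

lemma mean_pair_diff: "expectation (pair_diff j) = 0"
proof -
  have "expectation (pair_diff j) = expectation (\<lambda>\<omega>. \<zeta> (2*j) \<omega> - \<zeta> (2*j+1) \<omega>)"
    by (simp add: pair_diff_def[abs_def])
  also have "\<dots> = 0"
    by (subst Bochner_Integration.integral_diff) (auto simp: integrable_\<zeta> mean_\<zeta>)
  finally show ?thesis .
qed

lemma char_distr_pair_diff_sum:
  "char (distr M borel (\<lambda>\<omega>. (\<Sum>j<m. pair_diff j \<omega>) * r)) t = char law (r * t) ^ m * char law (- r * t) ^ m"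
proof -
  let ?A = "(\<lambda>j. 2*j) ` {..<m}" and ?B = "(\<lambda>j. 2*j+1) ` {..<m}"
  have injA: "inj_on (\<lambda>j::nat. 2*j) {..<m}" and injB: "inj_on (\<lambda>j::nat. 2*j+1) {..<m}"
    by (auto simp: inj_on_def)
  have "?A \<inter> ?B = {}"
    by auto presburger
  moreover have "(\<Sum>j<m. pair_diff j \<omega>) = (\<Sum>i\<in>?A. \<zeta> i \<omega>) - (\<Sum>i\<in>?B. \<zeta> i \<omega>)" for \<omega>
  proof -
    have "(\<Sum>i\<in>?A. \<zeta> i \<omega>) = (\<Sum>j<m. \<zeta> (2*j) \<omega>)" "(\<Sum>i\<in>?B. \<zeta> i \<omega>) = (\<Sum>j<m. \<zeta> (2*j+1) \<omega>)"
      by (rule sum.reindex_cong[OF injA] sum.reindex_cong[OF injB]; simp)+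
    then show ?thesis
      by (simp add: pair_diff_def sum_subtractf)
  qed
  ultimately show ?thesis
    using char_distr_sum_diff[of ?A ?B r t] card_image[OF injA] card_image[OF injB] by simp
qed

lemma tendsto_char_pair_diff_sum:
  assumes "s2 > 0"
  shows "(\<lambda>m. char (distr M borel (\<lambda>\<omega>. (\<Sum>j<m. pair_diff j \<omega>) * (1 / sqrt (2 * s2 * m)))) t)
    \<longlonglongrightarrow> char std_normal_distribution t"
proof -
  define \<sigma> where "\<sigma> = sqrt (2 * s2)"
  have \<sigma>: "\<sigma> > 0" "\<sigma>\<^sup>2 = 2 * s2"
    using assms by (auto simp: \<sigma>_def)
  have "variance (pair_diff j) = \<sigma>\<^sup>2" for j
    using square_pair_diff mean_pair_diff \<sigma> by simp
  from central_limit_theorem[OF indep_vars_pair_diff mean_pair_diff \<sigma>(1) square_pair_diff(1) this distr_pair_diff]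
  have "(\<lambda>m. char (distr M borel (\<lambda>\<omega>. (\<Sum>j<m. pair_diff j \<omega> - 0) / sqrt (m * \<sigma>\<^sup>2))) t)
      \<longlonglongrightarrow> char std_normal_distribution t"
    by (intro levy_continuity1[OF _ real_dist_normal_dist]) (auto intro!: real_distribution_distr)
  then show ?thesis
    using \<sigma>(2) by (simp add: ac_simps)
qed

lemma weak_conv_sum_diff:
  assumes s2: "s2 > 0" and v: "v > 0"
    and AB: "\<And>n. finite (A n)" "\<And>n. finite (B n)" "\<And>n. A n \<inter> B n = {}"
    and cA: "\<And>n. card (A n) = N n" and cB: "\<And>n. card (B n) = N n"
    and N: "filterlim N at_top sequentially"
  shows "weak_conv_m (\<lambda>n. distr M borel
      (\<lambda>\<omega>. ((\<Sum>i\<in>A n. \<zeta> i \<omega>) - (\<Sum>i\<in>B n. \<zeta> i \<omega>)) * (sqrt v / sqrt (2 * s2 * N n)))) (gauss0 v)"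
proof (rule levy_continuity)
  fix t :: real
  have "(\<lambda>n. char (distr M borel (\<lambda>\<omega>. (\<Sum>j<N n. pair_diff j \<omega>) * (1 / sqrt (2 * s2 * N n)))) (sqrt v * t))
      \<longlonglongrightarrow> char std_normal_distribution (sqrt v * t)"
    by (rule filterlim_compose[OF tendsto_char_pair_diff_sum[OF s2] N])
  then show "(\<lambda>n. char (distr M borel
      (\<lambda>\<omega>. ((\<Sum>i\<in>A n. \<zeta> i \<omega>) - (\<Sum>i\<in>B n. \<zeta> i \<omega>)) * (sqrt v / sqrt (2 * s2 * N n)))) t)
      \<longlonglongrightarrow> char (gauss0 v) t"
    unfolding char_gauss0[OF v] char_distr_pair_diff_sum char_distr_sum_diff[OF AB] cA cB
    by (simp add: ac_simps)
qed (simp_all add: real_distribution_gauss0)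

lemma square_sum_disjoint_family:
  assumes "\<And>k. k \<in> KK \<Longrightarrow> finite (S k)" and "finite KK" and "disjoint_family_on S KK"
  shows "integrable M (\<lambda>\<omega>. (\<Sum>k\<in>KK. \<Sum>i\<in>S k. g k i * \<zeta> i \<omega>)\<^sup>2)"
    and "expectation (\<lambda>\<omega>. (\<Sum>k\<in>KK. \<Sum>i\<in>S k. g k i * \<zeta> i \<omega>)\<^sup>2) = (\<Sum>k\<in>KK. \<Sum>i\<in>S k. (g k i)\<^sup>2) * s2"
proof -
  let ?U = "\<Union>k\<in>KK. S k" and ?c = "\<lambda>i. g (THE k. k \<in> KK \<and> i \<in> S k) i"
  have fU: "finite ?U" using assms by auto
  have e1: "(\<Sum>k\<in>KK. \<Sum>i\<in>S k. g k i * \<zeta> i \<omega>) = (\<Sum>i\<in>?U. ?c i * \<zeta> i \<omega>)" for \<omega>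
    using sum_UN_disjoint_family_THE[OF assms, of "\<lambda>k i. g k i * \<zeta> i \<omega>"] by auto
  have e2: "(\<Sum>k\<in>KK. \<Sum>i\<in>S k. (g k i)\<^sup>2) = (\<Sum>i\<in>?U. (?c i)\<^sup>2)"
    using sum_UN_disjoint_family_THE[OF assms, of "\<lambda>k i. (g k i)\<^sup>2"] by auto
  show "integrable M (\<lambda>\<omega>. (\<Sum>k\<in>KK. \<Sum>i\<in>S k. g k i * \<zeta> i \<omega>)\<^sup>2)"
    unfolding e1 by (rule square_lincomb(1)[OF fU])
  show "expectation (\<lambda>\<omega>. (\<Sum>k\<in>KK. \<Sum>i\<in>S k. g k i * \<zeta> i \<omega>)\<^sup>2) = (\<Sum>k\<in>KK. \<Sum>i\<in>S k. (g k i)\<^sup>2) * s2"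
    unfolding e1 e2 by (rule square_lincomb(2)[OF fU])
qed

lemma square_weighted_sum_diff:
  fixes A B :: "nat \<Rightarrow> nat set" and c :: "nat \<Rightarrow> real"
  assumes fin: "\<And>k. k < K \<Longrightarrow> finite (A k)" "\<And>k. k < K \<Longrightarrow> finite (B k)"
    and disj: "disjoint_family_on (\<lambda>k. A k \<union> B k) {..<K}" "\<And>k. k < K \<Longrightarrow> A k \<inter> B k = {}"
    and card: "\<And>k. k < K \<Longrightarrow> card (A k) = card (B k)"
  shows "integrable M (\<lambda>\<omega>. (\<Sum>k<K. c k * ((\<Sum>i\<in>A k. \<zeta> i \<omega>) - (\<Sum>i\<in>B k. \<zeta> i \<omega>)))\<^sup>2)"
    and "expectation (\<lambda>\<omega>. (\<Sum>k<K. c k * ((\<Sum>i\<in>A k. \<zeta> i \<omega>) - (\<Sum>i\<in>B k. \<zeta> i \<omega>)))\<^sup>2)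
           = (\<Sum>k<K. 2 * real (card (A k)) * (c k)\<^sup>2) * s2"
proof -
  define S where "S = (\<lambda>k. A k \<union> B k)"
  have S: "\<And>k. k \<in> {..<K} \<Longrightarrow> finite (S k)" "disjoint_family_on S {..<K}"
    using fin disj by (auto simp: S_def)
  have eq: "(\<Sum>k<K. c k * ((\<Sum>i\<in>A k. \<zeta> i \<omega>) - (\<Sum>i\<in>B k. \<zeta> i \<omega>)))
      = (\<Sum>k<K. \<Sum>i\<in>S k. (c k * sign_in (A k) i) * \<zeta> i \<omega>)" for \<omega>
    unfolding S_def
    by (intro sum.cong refl) (simp add: sum_diff_eq_sum_sign_in fin disj sum_distrib_left ac_simps)
  have sq: "(\<Sum>i\<in>S k. (c k * sign_in (A k) i)\<^sup>2) = 2 * real (card (A k)) * (c k)\<^sup>2" if "k \<in> {..<K}" for k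
  proof -
    have "card (S k) = 2 * card (A k)"
      using that card_Un_disjoint[OF fin(1) fin(2) disj(2), of k] card[of k] by (simp add: S_def)
    moreover have "(c k * sign_in (A k) i)\<^sup>2 = (c k)\<^sup>2" for i
      by (simp add: sign_in_def)
    ultimately show ?thesis by simp
  qed
  show "integrable M (\<lambda>\<omega>. (\<Sum>k<K. c k * ((\<Sum>i\<in>A k. \<zeta> i \<omega>) - (\<Sum>i\<in>B k. \<zeta> i \<omega>)))\<^sup>2)"
    unfolding eq by (rule square_sum_disjoint_family(1)[OF S(1) _ S(2)]) auto
  show "expectation (\<lambda>\<omega>. (\<Sum>k<K. c k * ((\<Sum>i\<in>A k. \<zeta> i \<omega>) - (\<Sum>i\<in>B k. \<zeta> i \<omega>)))\<^sup>2)
           = (\<Sum>k<K. 2 * real (card (A k)) * (c k)\<^sup>2) * s2"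
  proof -
    have "expectation (\<lambda>\<omega>. (\<Sum>k<K. \<Sum>i\<in>S k. (c k * sign_in (A k) i) * \<zeta> i \<omega>)\<^sup>2)
        = (\<Sum>k<K. \<Sum>i\<in>S k. (c k * sign_in (A k) i)\<^sup>2) * s2"
      by (rule square_sum_disjoint_family(2)[OF S(1) _ S(2)]) auto
    then show ?thesis unfolding eq using sq by simp
  qed
qed

lemma oP1_weighted_sum_diff:
  fixes A B :: "nat \<Rightarrow> nat \<Rightarrow> nat set" and c :: "nat \<Rightarrow> nat \<Rightarrow> real" and K :: nat
  assumes fin: "\<And>n k. k < K \<Longrightarrow> finite (A n k)" "\<And>n k. k < K \<Longrightarrow> finite (B n k)"
    and disj: "\<And>n. disjoint_family_on (\<lambda>k. A n k \<union> B n k) {..<K}"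
      "\<And>n k. k < K \<Longrightarrow> A n k \<inter> B n k = {}"
    and card: "\<And>n k. k < K \<Longrightarrow> card (A n k) = card (B n k)"
    and c: "\<And>k. k < K \<Longrightarrow> (\<lambda>n. card (A n k) * (c n k)\<^sup>2) \<longlonglongrightarrow> 0"
  shows "oP1 M (\<lambda>n \<omega>. \<Sum>k<K. c n k * ((\<Sum>i\<in>A n k. \<zeta> i \<omega>) - (\<Sum>i\<in>B n k. \<zeta> i \<omega>)))"
proof (rule oP1_if_second_moment_tendsto_0[OF prob_space_axioms])
  show "integrable M (\<lambda>\<omega>. (\<Sum>k<K. c n k * ((\<Sum>i\<in>A n k. \<zeta> i \<omega>) - (\<Sum>i\<in>B n k. \<zeta> i \<omega>)))\<^sup>2)" for n
    by (rule square_weighted_sum_diff(1)[where A="A n" and B="B n"]) (use fin disj card in auto)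
  have "expectation (\<lambda>\<omega>. (\<Sum>k<K. c n k * ((\<Sum>i\<in>A n k. \<zeta> i \<omega>) - (\<Sum>i\<in>B n k. \<zeta> i \<omega>)))\<^sup>2)
      = (\<Sum>k<K. 2 * (card (A n k) * (c n k)\<^sup>2)) * s2" for n
    unfolding mult.assoc[symmetric]
    by (rule square_weighted_sum_diff(2)[where A="A n" and B="B n"]) (use fin disj card in auto)
  moreover have "(\<lambda>n. (\<Sum>k<K. 2 * (card (A n k) * (c n k)\<^sup>2)) * s2) \<longlonglongrightarrow> (\<Sum>k<K. 2 * 0) * s2"
    using c by (intro tendsto_intros) auto
  ultimately show "(\<lambda>n. expectation (\<lambda>\<omega>. (\<Sum>k<K. c n k * ((\<Sum>i\<in>A n k. \<zeta> i \<omega>) - (\<Sum>i\<in>B n k. \<zeta> i \<omega>)))\<^sup>2))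
      \<longlonglongrightarrow> 0"
    by simp
qed simp

lemma weak_conv_weighted_sum_diff:
  fixes A B :: "nat \<Rightarrow> nat \<Rightarrow> nat set" and c :: "nat \<Rightarrow> nat \<Rightarrow> real" and K :: nat
  defines "N n \<equiv> \<Sum>k<K. card (A n k)"
  assumes s2: "s2 > 0" and v: "v > 0"
    and fin: "\<And>n k. k < K \<Longrightarrow> finite (A n k)" "\<And>n k. k < K \<Longrightarrow> finite (B n k)"
    and disj: "\<And>n. disjoint_family_on (\<lambda>k. A n k \<union> B n k) {..<K}"
      "\<And>n k. k < K \<Longrightarrow> A n k \<inter> B n k = {}"
    and card: "\<And>n k. k < K \<Longrightarrow> card (A n k) = card (B n k)"
    and N: "filterlim N at_top sequentially"
    and c: "\<And>k. k < K \<Longrightarrow> (\<lambda>n. card (A n k) * (c n k - sqrt v / sqrt (2 * s2 * N n))\<^sup>2) \<longlonglongrightarrow> 0"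
  shows "weak_conv_m (\<lambda>n. distr M borel
           (\<lambda>\<omega>. \<Sum>k<K. c n k * ((\<Sum>i\<in>A n k. \<zeta> i \<omega>) - (\<Sum>i\<in>B n k. \<zeta> i \<omega>)))) (gauss0 v)"
proof -
  define r where "r n = sqrt v / sqrt (2 * s2 * N n)" for n
  define AU where "AU n = (\<Union>k<K. A n k)" for n
  define BU where "BU n = (\<Union>k<K. B n k)" for n
  have disjA: "disjoint_family_on (A n) {..<K}" and disjB: "disjoint_family_on (B n) {..<K}" for n
    using disj(1)[of n] unfolding disjoint_family_on_def by blast+
  have disjAB: "A n k \<inter> B n k' = {}" if "k < K" "k' < K" for n k k'
    using disj(1)[of n] disj(2)[OF that(1)] that
    unfolding disjoint_family_on_def by (cases "k = k'") blast+
  have sumU: "(\<Sum>i\<in>AU n. \<zeta> i \<omega>) = (\<Sum>k<K. \<Sum>i\<in>A n k. \<zeta> i \<omega>)"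
    "(\<Sum>i\<in>BU n. \<zeta> i \<omega>) = (\<Sum>k<K. \<Sum>i\<in>B n k. \<zeta> i \<omega>)" for n \<omega>
    unfolding AU_def BU_def using fin disjA disjB by (auto intro: sum.UNION_disjoint_family)
  have cardU: "card (AU n) = N n" "card (BU n) = N n" for n
    unfolding AU_def BU_def N_def
    using card_UN_disjoint'[OF disjA] card_UN_disjoint'[OF disjB] fin card by simp_all
  have CLT: "weak_conv_m (\<lambda>n. distr M borel
      (\<lambda>\<omega>. ((\<Sum>i\<in>AU n. \<zeta> i \<omega>) - (\<Sum>i\<in>BU n. \<zeta> i \<omega>)) * r n)) (gauss0 v)"
    unfolding r_def
    by (rule weak_conv_sum_diff[OF s2 v _ _ _ cardU N])
      (use fin disjAB in \<open>auto simp: AU_def BU_def disjoint_iff\<close>)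
  define corr where
    "corr n \<omega> = (\<Sum>k<K. (c n k - r n) * ((\<Sum>i\<in>A n k. \<zeta> i \<omega>) - (\<Sum>i\<in>B n k. \<zeta> i \<omega>)))" for n \<omega>
  have split: "(\<Sum>k<K. c n k * ((\<Sum>i\<in>A n k. \<zeta> i \<omega>) - (\<Sum>i\<in>B n k. \<zeta> i \<omega>)))
      = ((\<Sum>i\<in>AU n. \<zeta> i \<omega>) - (\<Sum>i\<in>BU n. \<zeta> i \<omega>)) * r n + corr n \<omega>" for n \<omega>
  proof -
    have "corr n \<omega> = (\<Sum>k<K. c n k * ((\<Sum>i\<in>A n k. \<zeta> i \<omega>) - (\<Sum>i\<in>B n k. \<zeta> i \<omega>)))
        - (\<Sum>k<K. r n * ((\<Sum>i\<in>A n k. \<zeta> i \<omega>) - (\<Sum>i\<in>B n k. \<zeta> i \<omega>)))"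
      unfolding corr_def left_diff_distrib sum_subtractf ..
    also have "(\<Sum>k<K. r n * ((\<Sum>i\<in>A n k. \<zeta> i \<omega>) - (\<Sum>i\<in>B n k. \<zeta> i \<omega>)))
        = ((\<Sum>i\<in>AU n. \<zeta> i \<omega>) - (\<Sum>i\<in>BU n. \<zeta> i \<omega>)) * r n"
      unfolding sumU sum_distrib_left[symmetric] sum_subtractf by (rule mult.commute)
    finally show ?thesis by simp
  qed
  have "oP1 M corr"
    unfolding corr_def using c unfolding r_def
    by (intro oP1_weighted_sum_diff[OF fin disj card]) auto
  from weak_conv_m_add_oP1[OF _ CLT real_distribution_gauss0 this]
  show ?thesis unfolding split by simp
qed

end

section \<open>Held-out averages of conditionally i.i.d. terms\<close>

lemma measurable_PiM_UNIV:
  assumes "\<And>i. (\<lambda>\<omega>. f \<omega> i) \<in> measurable N (Mi i)"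
  shows "f \<in> measurable N (PiM UNIV Mi)"
proof -
  have "(\<lambda>\<omega> i. f \<omega> i) \<in> measurable N (PiM UNIV Mi)"
    by (rule measurable_PiM_single') (use assms measurable_space[OF assms] in \<open>auto simp: PiE_def extensional_def\<close>)
  then show ?thesis by simp
qed

lemma indep_vars_PiM_coordinates:
  assumes P: "prob_space P"
  shows "prob_space.indep_vars (PiM J (\<lambda>_. P)) (\<lambda>_. P) (\<lambda>i w. w i) J"
proof -
  interpret PJ: prob_space "PiM J (\<lambda>_. P)" by (rule prob_space_PiM) (use P in auto)
  show ?thesis
  proof (cases "J = {}")
    case True then show ?thesis
      unfolding PJ.indep_vars_def PJ.indep_sets_def by auto
  next
    case False
    have rv: "PJ.random_variable P (\<lambda>w. w i)" if "i \<in> J" for i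
      using that by measurable
    have "distr (PiM J (\<lambda>_. P)) (PiM J (\<lambda>_. P)) (\<lambda>x. \<lambda>i\<in>J. x i) = distr (PiM J (\<lambda>_. P)) (PiM J (\<lambda>_. P)) (\<lambda>x. x)"
      by (rule distr_cong) (auto simp: space_PiM)
    also have "\<dots> = PiM J (\<lambda>_. P)" by simp
    also have "\<dots> = PiM J (\<lambda>i. distr (PiM J (\<lambda>_. P)) P (\<lambda>w. w i))"
    proof (rule PiM_cong)
      fix i assume "i \<in> J"
      then show "P = distr (PiM J (\<lambda>_. P)) P (\<lambda>w. w i)"
        using distr_PiM_component[of J "\<lambda>_. P" i] P by simp
    qed simp
    finally show ?thesis
      using PJ.indep_vars_iff_distr_eq_PiM'[OF False rv] by simp
  qed
qed

lemma PiM_coordinate_integral: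
  fixes g :: "'z \<Rightarrow> real"
  assumes P: "prob_space P" and i: "i \<in> J" and g[measurable]: "g \<in> borel_measurable P"
  shows "(\<integral>w. g (w i) \<partial>PiM J (\<lambda>_. P)) = (\<integral>z. g z \<partial>P)"
    and "integrable (PiM J (\<lambda>_. P)) (\<lambda>w. g (w i)) \<longleftrightarrow> integrable P g"
proof -
  have d: "distr (PiM J (\<lambda>_. P)) P (\<lambda>w. w i) = P"
    by (rule distr_PiM_component) (use P i in auto)
  have m: "(\<lambda>w. w i) \<in> measurable (PiM J (\<lambda>_. P)) P" using i by measurable
  show "(\<integral>w. g (w i) \<partial>PiM J (\<lambda>_. P)) = (\<integral>z. g z \<partial>P)"
    using integral_distr[OF m, of g] d by simp
  show "integrable (PiM J (\<lambda>_. P)) (\<lambda>w. g (w i)) \<longleftrightarrow> integrable P g"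
    using integrable_distr_eq[OF m, of g] d by simp
qed

lemma prob_PiM_sum_deviation_le:
  fixes f :: "'z \<Rightarrow> real" and J :: "'i set"
  assumes P: "prob_space P" and J: "finite J" and [measurable]: "f \<in> borel_measurable P"
    and sq: "integrable P (\<lambda>z. (f z)\<^sup>2)" and e: "e > 0"
  shows "measure (PiM J (\<lambda>_. P))
      {w\<in>space (PiM J (\<lambda>_. P)). e < \<bar>c * ((\<Sum>i\<in>J. f (w i) - (\<integral>z. f z \<partial>P)) / card J)\<bar>}
    \<le> c\<^sup>2 * (\<integral>z. (f z)\<^sup>2 \<partial>P) / (e\<^sup>2 * card J)"
proof -
  interpret P: prob_space P by fact
  interpret PJ: prob_space "PiM J (\<lambda>_. P)" by (rule prob_space_PiM) (use P in auto)
  define X where "X i w = f (w i) - (\<integral>z. f z \<partial>P)" for i :: 'i and w :: "'i \<Rightarrow> 'z"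
  have int: "integrable P f"
    by (rule P.square_integrable_imp_integrable) (use sq in auto)
  have sq_centered: "integrable P (\<lambda>z. (f z - (\<integral>z. f z \<partial>P))\<^sup>2)"
    using int sq by (simp add: power2_diff)
  have "PJ.indep_vars (\<lambda>_. borel) X J"
    unfolding X_def by (rule PJ.indep_vars_compose2[OF indep_vars_PiM_coordinates[OF P]]) simp
  moreover have "integrable (PiM J (\<lambda>_. P)) (\<lambda>w. (X i w)\<^sup>2)" if "i \<in> J" for i
    unfolding X_def using PiM_coordinate_integral(2)[OF P that, of "\<lambda>z. (f z - (\<integral>z. f z \<partial>P))\<^sup>2"] sq_centered
    by simp
  moreover have "PJ.expectation (X i) = 0" if "i \<in> J" for i
    unfolding X_def using PiM_coordinate_integral(1)[OF P that, of "\<lambda>z. f z - (\<integral>z. f z \<partial>P)"] int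
    by (simp add: P.prob_space)
  moreover have "PJ.expectation (\<lambda>w. (X i w)\<^sup>2) = P.variance f" if "i \<in> J" for i
    unfolding X_def by (rule PiM_coordinate_integral(1)[OF P that]) simp
  ultimately have S: "integrable (PiM J (\<lambda>_. P)) (\<lambda>w. (\<Sum>i\<in>J. X i w)\<^sup>2)"
    "PJ.expectation (\<lambda>w. (\<Sum>i\<in>J. X i w)\<^sup>2) = real (card J) * P.variance f"
    using PJ.integral_square_sum_indep[OF J] by auto
  have "PJ.prob {w\<in>space (PiM J (\<lambda>_. P)). e < \<bar>c * ((\<Sum>i\<in>J. X i w) / card J)\<bar>}
      \<le> PJ.expectation (\<lambda>w. (c * ((\<Sum>i\<in>J. X i w) / card J))\<^sup>2) / e\<^sup>2"
    using S(1) by (intro PJ.prob_abs_greater_le_second_moment[OF _ _ e]) (simp_all add: X_def power_mult_distrib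
        power_divide)
  also have "PJ.expectation (\<lambda>w. (c * ((\<Sum>i\<in>J. X i w) / card J))\<^sup>2)
      = (c / card J)\<^sup>2 * PJ.expectation (\<lambda>w. (\<Sum>i\<in>J. X i w)\<^sup>2)"
    by (simp add: power_mult_distrib power_divide)
  also have "\<dots> = c\<^sup>2 * P.variance f / card J"
    unfolding S(2) by (cases "card J = 0") (simp_all add: power2_eq_square)
  also have "\<dots> / e\<^sup>2 \<le> c\<^sup>2 * (\<integral>z. (f z)\<^sup>2 \<partial>P) / (e\<^sup>2 * card J)"
    using P.variance_eq[OF int sq] by (auto simp: mult.commute intro!: divide_right_mono mult_left_mono)
  finally show ?thesis by (simp add: X_def)
qed

lemma integrable_integral_le_if_nn_integral_le:
  fixes g :: "'a \<Rightarrow> real"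
  assumes [measurable]: "g \<in> borel_measurable M" and nonneg: "\<And>x. g x \<ge> 0"
    and le: "(\<integral>\<^sup>+x. ennreal (g x) \<partial>M) \<le> ennreal \<delta>" and "\<delta> \<ge> 0"
  shows "integrable M g" and "(\<integral>x. g x \<partial>M) \<le> \<delta>"
proof -
  show int: "integrable M g"
    using le nonneg by (intro integrableI_nonneg) (auto simp: top_unique intro: le_less_trans)
  have "ennreal (\<integral>x. g x \<partial>M) \<le> ennreal \<delta>"
    using le nn_integral_eq_integral[OF int] nonneg by simp
  then show "(\<integral>x. g x \<partial>M) \<le> \<delta>"
    using \<open>\<delta> \<ge> 0\<close> by simp
qed

lemma (in prob_space) prob_indep_pair_le:
  assumes ind: "indep_var MV V MW W" and G: "G \<in> sets (MV \<Otimes>\<^sub>M MW)" and c: "c \<ge> 0"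
    and sections: "\<And>v. v \<in> space MV \<Longrightarrow> measure (distr M MW W) (Pair v -` G) \<le> c"
  shows "prob {\<omega>\<in>space M. (V \<omega>, W \<omega>) \<in> G} \<le> c"
proof -
  have [measurable]: "V \<in> measurable M MV" "W \<in> measurable M MW"
    using ind by (auto intro: indep_var_rv1 indep_var_rv2)
  interpret V: prob_space "distr M MV V" by (rule prob_space_distr) simp
  interpret W: prob_space "distr M MW W" by (rule prob_space_distr) simp
  have "emeasure (distr M MV V \<Otimes>\<^sub>M distr M MW W) G
      = (\<integral>\<^sup>+v. emeasure (distr M MW W) (Pair v -` G) \<partial>distr M MV V)"
    by (rule W.emeasure_pair_measure_alt) (use G in simp)
  also have "\<dots> \<le> (\<integral>\<^sup>+v. ennreal c \<partial>distr M MV V)"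
    by (intro nn_integral_mono) (simp add: W.emeasure_eq_measure sections ennreal_leI)
  also have "\<dots> = ennreal c"
    using V.emeasure_space_1 by simp
  finally have "measure (distr M MV V \<Otimes>\<^sub>M distr M MW W) G \<le> c"
    using c unfolding measure_def by (intro enn2real_leI) auto
  moreover have "distr M (MV \<Otimes>\<^sub>M MW) (\<lambda>\<omega>. (V \<omega>, W \<omega>)) = distr M MV V \<Otimes>\<^sub>M distr M MW W"
    using ind by (simp add: indep_var_distribution_eq)
  moreover have "prob {\<omega>\<in>space M. (V \<omega>, W \<omega>) \<in> G} = measure (distr M (MV \<Otimes>\<^sub>M MW) (\<lambda>\<omega>. (V \<omega>, W \<omega>))) G"
    using G by (subst measure_distr) (auto intro!: arg_cong[where f=prob])
  ultimately show ?thesis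
    by simp
qed

lemma (in prob_space) prob_conditional_deviation_le:
  fixes V :: "'a \<Rightarrow> 'i \<Rightarrow> 'z" and W :: "'a \<Rightarrow> 'i \<Rightarrow> 'z" and F :: "('i \<Rightarrow> 'z) \<Rightarrow> 'z \<Rightarrow> real"
  assumes P: "prob_space P"
    and ind: "indep_var MV V (PiM J (\<lambda>_. P)) W"
    and WD: "distr M (PiM J (\<lambda>_. P)) W = PiM J (\<lambda>_. P)"
    and Fm: "(\<lambda>(v,z). F v z) \<in> borel_measurable (MV \<Otimes>\<^sub>M P)"
    and J: "finite J" and e: "e > 0" and \<delta>: "\<delta> \<ge> 0"
  shows "prob {\<omega>\<in>space M. e < \<bar>c * ((\<Sum>i\<in>J. F (V \<omega>) (W \<omega> i) - (\<integral>z. F (V \<omega>) z \<partial>P)) / card J)\<bar> \<and>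
      (\<integral>\<^sup>+z. ennreal ((F (V \<omega>) z)\<^sup>2) \<partial>P) \<le> ennreal \<delta>} \<le> c\<^sup>2 * \<delta> / (e\<^sup>2 * card J)"
proof -
  interpret P: prob_space P by fact
  interpret PJ: prob_space "PiM J (\<lambda>_. P)" by (rule prob_space_PiM) (use P in auto)
  have [measurable]: "(\<lambda>x. F (f x) (g x)) \<in> borel_measurable N"
    if "f \<in> measurable N MV" "g \<in> measurable N P" for f g N
    using measurable_compose[OF measurable_Pair[OF that] Fm] by simp
  define G where "G = {x \<in> space (MV \<Otimes>\<^sub>M PiM J (\<lambda>_. P)).
    e < \<bar>c * ((\<Sum>i\<in>J. F (fst x) (snd x i) - (\<integral>z. F (fst x) z \<partial>P)) / card J)\<bar> \<and>
    (\<integral>\<^sup>+z. ennreal ((F (fst x) z)\<^sup>2) \<partial>P) \<le> ennreal \<delta>}"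
  have "(\<lambda>v. \<integral>z. F v z \<partial>P) \<in> borel_measurable MV" "(\<lambda>v. \<integral>\<^sup>+z. ennreal ((F v z)\<^sup>2) \<partial>P) \<in> borel_measurable MV"
    by (auto intro!: P.borel_measurable_lebesgue_integral P.borel_measurable_nn_integral
        simp: case_prod_beta' measurable_split_conv Fm)
  then have G_sets: "G \<in> sets (MV \<Otimes>\<^sub>M PiM J (\<lambda>_. P))"
    unfolding G_def by measurable
  have "{\<omega>\<in>space M. e < \<bar>c * ((\<Sum>i\<in>J. F (V \<omega>) (W \<omega> i) - (\<integral>z. F (V \<omega>) z \<partial>P)) / card J)\<bar> \<and>
        (\<integral>\<^sup>+z. ennreal ((F (V \<omega>) z)\<^sup>2) \<partial>P) \<le> ennreal \<delta>} = {\<omega>\<in>space M. (V \<omega>, W \<omega>) \<in> G}"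
    using measurable_space[OF indep_var_rv1[OF ind]] measurable_space[OF indep_var_rv2[OF ind]]
    by (auto simp: G_def space_pair_measure)
  also have "prob \<dots> \<le> c\<^sup>2 * \<delta> / (e\<^sup>2 * card J)"
  proof (rule prob_indep_pair_le[OF ind G_sets])
    fix v assume v: "v \<in> space MV"
    show "measure (distr M (PiM J (\<lambda>_. P)) W) (Pair v -` G) \<le> c\<^sup>2 * \<delta> / (e\<^sup>2 * card J)"
    proof (cases "(\<integral>\<^sup>+z. ennreal ((F v z)\<^sup>2) \<partial>P) \<le> ennreal \<delta>")
      case True
      have [measurable]: "F v \<in> borel_measurable P" using v by simp
      have sq: "integrable P (\<lambda>z. (F v z)\<^sup>2)" and small: "(\<integral>z. (F v z)\<^sup>2 \<partial>P) \<le> \<delta>"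
        using integrable_integral_le_if_nn_integral_le[OF _ _ True \<delta>] by simp_all
      have "Pair v -` G \<subseteq> {w\<in>space (PiM J (\<lambda>_. P)). e < \<bar>c * ((\<Sum>i\<in>J. F v (w i) - (\<integral>z. F v z \<partial>P)) / card J)\<bar>}"
        using v by (auto simp: G_def space_pair_measure)
      then have "measure (PiM J (\<lambda>_. P)) (Pair v -` G)
          \<le> measure (PiM J (\<lambda>_. P)) {w\<in>space (PiM J (\<lambda>_. P)).
               e < \<bar>c * ((\<Sum>i\<in>J. F v (w i) - (\<integral>z. F v z \<partial>P)) / card J)\<bar>}"
        by (rule PJ.finite_measure_mono) measurable
      also have "\<dots> \<le> c\<^sup>2 * (\<integral>z. (F v z)\<^sup>2 \<partial>P) / (e\<^sup>2 * card J)"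
        by (rule prob_PiM_sum_deviation_le[OF P J _ sq e]) simp
      also have "\<dots> \<le> c\<^sup>2 * \<delta> / (e\<^sup>2 * card J)"
        using small by (intro divide_right_mono mult_left_mono) auto
      finally show ?thesis
        using WD by simp
    qed (use v \<delta> in \<open>simp add: G_def space_pair_measure\<close>)
  qed (use \<delta> e in simp)
  finally show ?thesis .
qed

lemma (in prob_space) prob_held_out_deviation_le:
  fixes Z :: "nat \<Rightarrow> 'a \<Rightarrow> 'z" and J :: "nat set" and F :: "(nat \<Rightarrow> 'z) \<Rightarrow> 'z \<Rightarrow> real"
  assumes P: "prob_space P" and Zind: "indep_vars (\<lambda>_. P) Z UNIV" and Zlaw: "\<And>i. distr M P (Z i) = P"
    and J: "finite J" "J \<noteq> {}"
    and Fm: "(\<lambda>(v,z). F v z) \<in> borel_measurable (PiM (UNIV - J) (\<lambda>_. P) \<Otimes>\<^sub>M P)"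
    and e: "e > 0" and \<delta>: "\<delta> \<ge> 0"
  shows "prob {\<omega>\<in>space M. e < \<bar>c * ((\<Sum>i\<in>J. F (restrict (\<lambda>i. Z i \<omega>) (UNIV - J)) (Z i \<omega>)
        - (\<integral>z. F (restrict (\<lambda>i. Z i \<omega>) (UNIV - J)) z \<partial>P)) / card J)\<bar>
      \<and> (\<integral>\<^sup>+z. ennreal ((F (restrict (\<lambda>i. Z i \<omega>) (UNIV - J)) z)\<^sup>2) \<partial>P) \<le> ennreal \<delta>}
    \<le> c\<^sup>2 * \<delta> / (e\<^sup>2 * card J)"
proof -
  have [measurable]: "Z i \<in> measurable M P" for i
    using Zind unfolding indep_vars_def by auto
  have ind: "indep_var (PiM (UNIV - J) (\<lambda>_. P)) (\<lambda>\<omega>. restrict (\<lambda>i. Z i \<omega>) (UNIV - J))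
      (PiM J (\<lambda>_. P)) (\<lambda>\<omega>. restrict (\<lambda>i. Z i \<omega>) J)"
    by (rule indep_var_restrict[OF Zind]) auto
  have "distr M (PiM J (\<lambda>_. P)) (\<lambda>\<omega>. restrict (\<lambda>i. Z i \<omega>) J) = PiM J (\<lambda>i. distr M P (Z i))"
    using indep_vars_iff_distr_eq_PiM'[where I=J and M'="\<lambda>_. P" and X=Z] indep_vars_subset[OF Zind] J
    by auto
  then have WD: "distr M (PiM J (\<lambda>_. P)) (\<lambda>\<omega>. restrict (\<lambda>i. Z i \<omega>) J) = PiM J (\<lambda>_. P)"
    by (simp add: Zlaw)
  from prob_conditional_deviation_le[OF P ind WD Fm J(1) e \<delta>] show ?thesis
    by simp
qed

lemma (in finite_measure) oP1_if_deviation_controlled: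
  fixes q :: "nat \<Rightarrow> 'a \<Rightarrow> ennreal"
  assumes [measurable]: "\<And>n. W n \<in> borel_measurable M" "\<And>n. q n \<in> borel_measurable M"
    and q: "\<And>\<delta>. \<delta> > 0 \<Longrightarrow> (\<lambda>n. measure M {\<omega>\<in>space M. ennreal \<delta> < q n \<omega>}) \<longlonglongrightarrow> 0"
    and C: "C \<ge> 0"
    and bound: "\<And>e \<delta>. e > 0 \<Longrightarrow> \<delta> > 0 \<Longrightarrow>
      eventually (\<lambda>n. measure M {\<omega>\<in>space M. e < \<bar>W n \<omega>\<bar> \<and> q n \<omega> \<le> ennreal \<delta>} \<le> C * \<delta> / e\<^sup>2) sequentially"
  shows "oP1 M W"
proof (rule oP1I)
  fix e \<eta> :: real assume e: "e > 0" and \<eta>: "\<eta> > 0"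
  define \<delta> where "\<delta> = \<eta> * e\<^sup>2 / (2 * C + 1)"
  have pos: "2 * C + 1 > 0" using C by simp
  have \<delta>: "\<delta> > 0" using e \<eta> pos by (simp add: \<delta>_def)
  have "C * \<delta> / e\<^sup>2 = C * \<eta> / (2 * C + 1)"
    using e by (simp add: \<delta>_def)
  also have "\<dots> \<le> \<eta> / 2"
    using pos \<eta> by (simp add: field_simps)
  finally have small: "C * \<delta> / e\<^sup>2 \<le> \<eta> / 2" .
  have "eventually (\<lambda>n. measure M {\<omega>\<in>space M. ennreal \<delta> < q n \<omega>} < \<eta> / 2) sequentially"
    by (rule order_tendstoD(2)[OF q[OF \<delta>]]) (use \<eta> in simp)
  with bound[OF e \<delta>]
  show "eventually (\<lambda>n. measure M {\<omega>\<in>space M. e < \<bar>W n \<omega>\<bar>} \<le> \<eta>) sequentially"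
  proof eventually_elim
    case (elim n)
    have "measure M {\<omega>\<in>space M. e < \<bar>W n \<omega>\<bar>} \<le> measure M
        ({\<omega>\<in>space M. e < \<bar>W n \<omega>\<bar> \<and> q n \<omega> \<le> ennreal \<delta>} \<union> {\<omega>\<in>space M. ennreal \<delta> < q n \<omega>})"
      by (rule finite_measure_mono) auto
    also have "\<dots> \<le> measure M {\<omega>\<in>space M. e < \<bar>W n \<omega>\<bar> \<and> q n \<omega> \<le> ennreal \<delta>}
        + measure M {\<omega>\<in>space M. ennreal \<delta> < q n \<omega>}"
      by (rule measure_Un_le) auto
    finally show ?case using elim small by linarith
  qed
qed simp

lemma (in prob_space) oP1_scaled_held_out_deviation:
  fixes Z :: "nat \<Rightarrow> 'a \<Rightarrow> 'z" and P :: "'z measure" and JJ :: "nat \<Rightarrow> nat set"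
    and F :: "nat \<Rightarrow> (nat \<Rightarrow> 'z) \<Rightarrow> 'z \<Rightarrow> real" and c :: "nat \<Rightarrow> real" and A B :: real
  assumes P: "prob_space P"
    and Zind: "indep_vars (\<lambda>_. P) Z UNIV"
    and Zlaw: "\<And>i. distr M P (Z i) = P"
    and fin: "\<And>n. finite (JJ n)"
    and Fm: "\<And>n. (\<lambda>(v,z). F n v z) \<in> borel_measurable (PiM (UNIV - JJ n) (\<lambda>_. P) \<Otimes>\<^sub>M P)"
    and A: "A \<ge> 0" and cA: "\<And>n. (c n)\<^sup>2 \<le> A * real n"
    and B: "B > 0" and size: "eventually (\<lambda>n. real n \<le> B * real (card (JJ n))) sequentially"
    and q: "\<And>\<delta>. \<delta> > 0 \<Longrightarrow> (\<lambda>n. measure M {\<omega>\<in>space M. ennreal \<delta> <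
         (\<integral>\<^sup>+z. ennreal ((F n (restrict (\<lambda>i. Z i \<omega>) (UNIV - JJ n)) z)\<^sup>2) \<partial>P)}) \<longlonglongrightarrow> 0"
  shows "oP1 M (\<lambda>n \<omega>. c n * ((\<Sum>i\<in>JJ n. F n (restrict (\<lambda>i. Z i \<omega>) (UNIV - JJ n)) (Z i \<omega>)
             - (\<integral>z. F n (restrict (\<lambda>i. Z i \<omega>) (UNIV - JJ n)) z \<partial>P)) / card (JJ n)))"
proof -
  interpret P: prob_space P by fact
  define V where "V n \<omega> = restrict (\<lambda>i. Z i \<omega>) (UNIV - JJ n)" for n \<omega>
  define S where "S n \<omega> = (\<Sum>i\<in>JJ n. F n (V n \<omega>) (Z i \<omega>) - (\<integral>z. F n (V n \<omega>) z \<partial>P))" for n \<omega>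
  have [measurable]: "Z i \<in> measurable M P" for i
    using Zind unfolding indep_vars_def by auto
  have [measurable]: "V n \<in> measurable M (PiM (UNIV - JJ n) (\<lambda>_. P))" for n
    unfolding V_def by measurable
  have [measurable]: "(\<lambda>x. F n (f x) (g x)) \<in> borel_measurable N"
    if "f \<in> measurable N (PiM (UNIV - JJ n) (\<lambda>_. P))" "g \<in> measurable N P" for f g N n
    using measurable_compose[OF measurable_Pair[OF that] Fm[of n]] by simp
  have [measurable]: "(\<lambda>v. \<integral>z. F n v z \<partial>P) \<in> borel_measurable (PiM (UNIV - JJ n) (\<lambda>_. P))"
    and q_meas: "(\<lambda>v. \<integral>\<^sup>+z. ennreal ((F n v z)\<^sup>2) \<partial>P) \<in> borel_measurable (PiM (UNIV - JJ n) (\<lambda>_. P))"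
    for n
    by (auto intro!: P.borel_measurable_lebesgue_integral P.borel_measurable_nn_integral
        simp: case_prod_beta' measurable_split_conv Fm)
  have [measurable]: "(\<lambda>\<omega>. \<integral>\<^sup>+z. ennreal ((F n (V n \<omega>) z)\<^sup>2) \<partial>P) \<in> borel_measurable M" for n
    by (rule measurable_compose[OF _ q_meas]) simp
  have [measurable]: "S n \<in> borel_measurable M" for n
    unfolding S_def by measurable
  have "oP1 M (\<lambda>n \<omega>. c n * (S n \<omega> / card (JJ n)))"
  proof (rule oP1_if_deviation_controlled[where q="\<lambda>n \<omega>. \<integral>\<^sup>+z. ennreal ((F n (V n \<omega>) z)\<^sup>2) \<partial>P"])
    fix e \<delta> :: real assume e: "e > 0" and \<delta>: "\<delta> > 0"
    from size eventually_gt_at_top[of 0]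
    show "eventually (\<lambda>n. measure M {\<omega>\<in>space M. e < \<bar>c n * (S n \<omega> / card (JJ n))\<bar>
        \<and> (\<integral>\<^sup>+z. ennreal ((F n (V n \<omega>) z)\<^sup>2) \<partial>P) \<le> ennreal \<delta>} \<le> A * B * \<delta> / e\<^sup>2) sequentially"
    proof eventually_elim
      case (elim n)
      then have J: "JJ n \<noteq> {}" "card (JJ n) > 0"
        using B fin[of n] by (auto simp: card_gt_0_iff intro: ccontr)
      have "measure M {\<omega>\<in>space M. e < \<bar>c n * (S n \<omega> / card (JJ n))\<bar>
          \<and> (\<integral>\<^sup>+z. ennreal ((F n (V n \<omega>) z)\<^sup>2) \<partial>P) \<le> ennreal \<delta>} \<le> (c n)\<^sup>2 * \<delta> / (e\<^sup>2 * card (JJ n))"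
        using prob_held_out_deviation_le[OF P Zind Zlaw fin J(1) Fm e] \<delta> by (simp add: S_def V_def)
      also have "\<dots> \<le> A * (B * card (JJ n)) * \<delta> / (e\<^sup>2 * card (JJ n))"
        using cA[of n] elim A \<delta> e
        by (intro divide_right_mono mult_right_mono order_trans[OF cA[of n]] mult_left_mono) auto
      also have "\<dots> = A * B * \<delta> / e\<^sup>2"
        using J by simp
      finally show ?case .
    qed
  qed (use A B q in \<open>simp_all add: V_def S_def\<close>)
  then show ?thesis by (simp add: S_def V_def)
qed

section \<open>Second-order remainders\<close>

lemma bound_near_zero_if_sequential_bound:
  fixes Q :: "'p \<Rightarrow> 'g \<Rightarrow> bool" and N I :: "'p \<Rightarrow> 'g \<Rightarrow> real"
  assumes H: "\<forall>phs gs. (\<forall>j. Q (phs j) (gs j)) \<and> (\<lambda>j. N (phs j) (gs j)) \<longlonglongrightarrow> 0 \<longrightarrow>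
      eventually (\<lambda>j. \<bar>I (phs j) (gs j)\<bar> \<le> C * (N (phs j) (gs j))\<^sup>2) sequentially"
  shows "\<exists>\<eta>>0. \<forall>ph g. Q ph g \<and> \<bar>N ph g\<bar> < \<eta> \<longrightarrow> \<bar>I ph g\<bar> \<le> C * (N ph g)\<^sup>2"
proof (rule ccontr)
  assume "\<not> ?thesis"
  then have "\<forall>j::nat. \<exists>ph g. Q ph g \<and> \<bar>N ph g\<bar> < 1 / (Suc j) \<and> \<not> \<bar>I ph g\<bar> \<le> C * (N ph g)\<^sup>2"
    by (metis of_nat_0_less_iff zero_less_Suc divide_pos_pos zero_less_one)
  then obtain phs gs where S: "\<And>j. Q (phs j) (gs j)" "\<And>j. \<bar>N (phs j) (gs j)\<bar> < 1 / (Suc j)"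
      "\<And>j. \<not> \<bar>I (phs j) (gs j)\<bar> \<le> C * (N (phs j) (gs j))\<^sup>2"
    by metis
  have "(\<lambda>j. N (phs j) (gs j)) \<longlonglongrightarrow> 0"
  proof (rule tendsto_sandwich[of "\<lambda>j. - (1 / real (Suc j))" _ _ "\<lambda>j. 1 / real (Suc j)"])
    have "- (1 / real (Suc j)) \<le> N (phs j) (gs j)" "N (phs j) (gs j) \<le> 1 / real (Suc j)" for j
      using S(2)[of j] by arith+
    then show "eventually (\<lambda>j. - (1 / real (Suc j)) \<le> N (phs j) (gs j)) sequentially"
      "eventually (\<lambda>j. N (phs j) (gs j) \<le> 1 / real (Suc j)) sequentially"
      by (auto intro: always_eventually)
    show "(\<lambda>j. 1 / real (Suc j)) \<longlonglongrightarrow> 0"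
      by (rule LIMSEQ_Suc[OF lim_inverse_n'])
    then show "(\<lambda>j. - (1 / real (Suc j))) \<longlonglongrightarrow> 0"
      using tendsto_minus by fastforce
  qed
  then have "eventually (\<lambda>j. \<bar>I (phs j) (gs j)\<bar> \<le> C * (N (phs j) (gs j))\<^sup>2) sequentially"
    using H S(1) by blast
  then obtain j where "\<bar>I (phs j) (gs j)\<bar> \<le> C * (N (phs j) (gs j))\<^sup>2"
    using eventually_sequentially by auto
  with S(3) show False by blast
qed

lemma less_abs_iff_less_sqrt_mult_square:
  fixes e x :: real and n :: nat
  assumes "n > 0" "e > 0"
  shows "sqrt e * real n powr (-1/4) < \<bar>x\<bar> \<longleftrightarrow> e < \<bar>sqrt n * x\<^sup>2\<bar>"
proof -
  define s where "s = sqrt e * real n powr (-1/4)"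
  have "(real n powr (-1/4))\<^sup>2 * sqrt n = 1"
    using assms by (simp add: power2_eq_square powr_add[symmetric] powr_minus powr_half_sqrt[symmetric]
        divide_simps)
  then have s: "s\<^sup>2 * sqrt n = e"
    using assms by (simp add: s_def power_mult_distrib)
  have "s \<ge> 0"
    using assms by (simp add: s_def)
  then have "s < \<bar>x\<bar> \<longleftrightarrow> s\<^sup>2 < x\<^sup>2"
    using abs_le_square_iff[of x s] by (auto simp: not_le[symmetric])
  also have "\<dots> \<longleftrightarrow> s\<^sup>2 * sqrt n < x\<^sup>2 * sqrt n"
    using assms by simp
  finally show ?thesis
    unfolding s s_def[symmetric] by (simp add: abs_mult mult.commute)
qed

lemma oP1_sqrt_mult_square:
  assumes W: "small_oP M W (\<lambda>n. real n powr (-1/4))"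
  shows "oP1 M (\<lambda>n \<omega>. sqrt n * (W n \<omega>)\<^sup>2)"
  unfolding oP1_iff
proof (intro conjI allI impI)
  have [measurable]: "W n \<in> borel_measurable M" for n
    using W by (simp add: small_oP_def)
  show "(\<lambda>\<omega>. sqrt n * (W n \<omega>)\<^sup>2) \<in> borel_measurable M" for n
    by simp
  fix e :: real assume "e > 0"
  have sets_eq: "{\<omega>\<in>space M. sqrt e * real n powr (-1/4) < \<bar>W n \<omega>\<bar>} = {\<omega>\<in>space M. e < \<bar>sqrt n * (W n \<omega>)\<^sup>2\<bar>}"
    if "n > 0" for n
    using less_abs_iff_less_sqrt_mult_square[OF that \<open>e > 0\<close>] by auto
  have "(\<lambda>n. measure M {\<omega>\<in>space M. sqrt e * real n powr (-1/4) < \<bar>W n \<omega>\<bar>}) \<longlonglongrightarrow> 0"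
    using W \<open>e > 0\<close> by (simp add: small_oP_def)
  moreover have "eventually (\<lambda>n. measure M {\<omega>\<in>space M. sqrt e * real n powr (-1/4) < \<bar>W n \<omega>\<bar>}
      = measure M {\<omega>\<in>space M. e < \<bar>sqrt n * (W n \<omega>)\<^sup>2\<bar>}) sequentially"
    using eventually_gt_at_top[of 0] by eventually_elim (simp only: sets_eq)
  ultimately show "(\<lambda>n. measure M {\<omega>\<in>space M. e < \<bar>sqrt n * (W n \<omega>)\<^sup>2\<bar>}) \<longlonglongrightarrow> 0"
    by (rule Lim_transform_eventually)
qed

lemma prob_abs_ge_tendsto_0_if_small_oP:
  assumes "finite_measure M" and W: "small_oP M W (\<lambda>n. real n powr (-1/4))" and "\<eta> > 0"
  shows "(\<lambda>n. measure M {\<omega>\<in>space M. \<eta> \<le> \<bar>W n \<omega>\<bar>}) \<longlonglongrightarrow> 0"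
proof (rule tendsto_sandwich[OF _ _ tendsto_const])
  interpret finite_measure M by fact
  have [measurable]: "W n \<in> borel_measurable M" for n
    using W by (simp add: small_oP_def)
  have "((\<lambda>n. real n powr (-1/4)) \<longlongrightarrow> 0) sequentially"
    by (intro tendsto_neg_powr filterlim_real_sequentially) auto
  from order_tendstoD(2)[OF this \<open>\<eta> > 0\<close>]
  show "eventually (\<lambda>n. measure M {\<omega>\<in>space M. \<eta> \<le> \<bar>W n \<omega>\<bar>}
      \<le> measure M {\<omega>\<in>space M. 1 * real n powr (-1/4) < \<bar>W n \<omega>\<bar>}) sequentially"
    by eventually_elim (intro finite_measure_mono, auto)
  show "(\<lambda>n. measure M {\<omega>\<in>space M. 1 * real n powr (-1/4) < \<bar>W n \<omega>\<bar>}) \<longlonglongrightarrow> 0"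
    using W zero_less_one unfolding small_oP_def by blast
qed simp

lemma (in prob_space) oP1_sqrt_mult_if_locally_quadratic:
  assumes nr: "small_oP M nr (\<lambda>n. real n powr (-1/4))"
    and [measurable]: "\<And>n. b n \<in> borel_measurable M"
    and C: "C \<ge> 0" and \<eta>: "\<eta> > 0"
    and quadratic: "\<And>n \<omega>. \<omega> \<in> space M \<Longrightarrow> \<bar>nr n \<omega>\<bar> < \<eta> \<Longrightarrow> \<bar>b n \<omega>\<bar> \<le> C * (nr n \<omega>)\<^sup>2"
  shows "oP1 M (\<lambda>n \<omega>. sqrt n * b n \<omega>)"
proof (rule oP1_dominated_outside[OF finite_measure_axioms oP1_cmult[OF oP1_sqrt_mult_square[OF nr]]])
  have [measurable]: "nr n \<in> borel_measurable M" for n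
    using nr by (simp add: small_oP_def)
  show "{\<omega>\<in>space M. \<eta> \<le> \<bar>nr n \<omega>\<bar>} \<in> sets M" for n
    by measurable
  show "(\<lambda>n. measure M {\<omega>\<in>space M. \<eta> \<le> \<bar>nr n \<omega>\<bar>}) \<longlonglongrightarrow> 0"
    by (rule prob_abs_ge_tendsto_0_if_small_oP[OF finite_measure_axioms nr \<eta>])
  fix n \<omega> assume "\<omega> \<in> space M" "\<not> \<eta> \<le> \<bar>nr n \<omega>\<bar>"
  then show "\<bar>sqrt n * b n \<omega>\<bar> \<le> \<bar>C * (sqrt n * (nr n \<omega>)\<^sup>2)\<bar>"
    using mult_left_mono[OF quadratic[of \<omega> n], of "sqrt n"] C by (simp add: abs_mult mult.left_commute)
qed simp

lemma split_ratios_tendsto: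
  fixes m a ob :: "nat \<Rightarrow> nat" and K :: nat and \<tau> :: real
  assumes K: "K > 0" and mlim: "(\<lambda>n. real (m n) / real n) \<longlonglongrightarrow> 1 / K"
    and olim: "(\<lambda>n. real (ob n) / real (a n + ob n)) \<longlonglongrightarrow> \<tau>"
    and \<tau>: "0 \<le> \<tau>" "\<tau> < 1" and meq: "\<And>n. m n = 2 * a n + ob n"
  shows "(\<lambda>n. real (a n) / real n) \<longlonglongrightarrow> (1 - \<tau>) / (K * (2 - \<tau>))"
    and "(\<lambda>n. real (ob n) / real n) \<longlonglongrightarrow> \<tau> / (K * (2 - \<tau>))"
proof -
  let ?\<rho> = "\<lambda>n. real (ob n) / real (a n + ob n)"
  have "eventually (\<lambda>n. real (m n) / real n > 0) sequentially"
    by (rule order_tendstoD(1)[OF mlim]) (use K in simp)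
  then have evm: "eventually (\<lambda>n. a n + ob n > 0) sequentially"
    by eventually_elim (auto simp: meq intro: ccontr)
  have eq: "eventually (\<lambda>n. real (a n) / real n = (real (m n) / real n) * ((1 - ?\<rho> n) / (2 - ?\<rho> n))) sequentially"
    using evm
  proof eventually_elim
    case (elim n)
    then have p: "real (a n + ob n) > 0" by (metis of_nat_0_less_iff)
    have "1 - ?\<rho> n = real (a n) / real (a n + ob n)" using p by (simp add: field_simps)
    moreover have "2 - ?\<rho> n = real (m n) / real (a n + ob n)" using p by (simp add: field_simps meq)
    moreover have "m n > 0" using elim meq[of n] by linarith
    then have mp: "real (m n) > 0" by simp
    ultimately have "(1 - ?\<rho> n) / (2 - ?\<rho> n) = real (a n) / real (m n)"
      using p by simp
    then show ?case using mp by simp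
  qed
  have "(\<lambda>n. (real (m n) / real n) * ((1 - ?\<rho> n) / (2 - ?\<rho> n))) \<longlonglongrightarrow> (1 / K) * ((1 - \<tau>) / (2 - \<tau>))"
    by (intro tendsto_intros mlim olim) (use \<tau> in simp)
  then show A: "(\<lambda>n. real (a n) / real n) \<longlonglongrightarrow> (1 - \<tau>) / (K * (2 - \<tau>))"
    using Lim_transform_eventually[OF _ eq[THEN eventually_mono, OF sym]] by simp
  have eq2: "real (ob n) / real n = real (m n) / real n - 2 * (real (a n) / real n)" for n
    by (simp add: meq add_divide_distrib)
  have "(\<lambda>n. real (m n) / real n - 2 * (real (a n) / real n)) \<longlonglongrightarrow> 1 / K - 2 * ((1 - \<tau>) / (K * (2 - \<tau>)))"
    by (intro tendsto_intros mlim A)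
  moreover have "1 / K - 2 * ((1 - \<tau>) / (K * (2 - \<tau>))) = \<tau> / (K * (2 - \<tau>))"
    using K \<tau> by (simp add: field_simps)
  ultimately show "(\<lambda>n. real (ob n) / real n) \<longlonglongrightarrow> \<tau> / (K * (2 - \<tau>))"
    unfolding eq2 by simp
qed

lemma eventually_le_mult_if_ratio_tendsto:
  assumes "(\<lambda>n. real (a n) / real n) \<longlonglongrightarrow> \<alpha>" "\<alpha> > 0"
  shows "eventually (\<lambda>n. real n \<le> (2 / \<alpha>) * real (a n)) sequentially"
proof -
  have "eventually (\<lambda>n. real (a n) / real n > \<alpha> / 2) sequentially"
    by (rule order_tendstoD(1)[OF assms(1)]) (use assms(2) in simp)
  with eventually_gt_at_top[of 0] show ?thesis
  proof eventually_elim
    case (elim n)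
    then have "real (a n) > \<alpha> / 2 * real n" by (simp add: field_simps)
    then show ?case using assms(2) by (simp add: field_simps)
  qed
qed

lemma filterlim_at_top_if_ratio_tendsto:
  assumes "(\<lambda>n. real (a n) / real n) \<longlonglongrightarrow> \<alpha>" "\<alpha> > 0"
  shows "filterlim a at_top sequentially"
  unfolding filterlim_at_top
proof
  fix b :: nat
  from eventually_le_mult_if_ratio_tendsto[OF assms] eventually_ge_at_top[of "nat \<lceil>2 * real b / \<alpha>\<rceil>"]
  show "eventually (\<lambda>n. b \<le> a n) sequentially"
  proof eventually_elim
    case (elim n)
    have "2 * real b / \<alpha> \<le> real n" using elim(2) by linarith
    also have "\<dots> \<le> (2 / \<alpha>) * real (a n)" by (rule elim(1))
    finally show ?case using assms(2) by (simp add: field_simps)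
  qed
qed

lemma average_shift_decompose:
  fixes J :: "nat set" and z dl :: "nat \<Rightarrow> real"
  assumes "finite J"
  shows "(\<Sum>i\<in>J. \<mu> + z i + dl i) / card J = (\<Sum>i\<in>J. z i) / card J + (\<Sum>i\<in>J. dl i - b) / card J
          + (if J = {} then 0 else \<mu> + b)"
proof (cases "J = {}")
  case True then show ?thesis by simp
next
  case False
  then have c: "real (card J) > 0" using assms by (simp add: card_gt_0_iff)
  have "(\<Sum>i\<in>J. \<mu> + z i + dl i) = (\<Sum>i\<in>J. z i) + (\<Sum>i\<in>J. dl i - b) + card J * (\<mu> + b)"
    by (simp add: sum.distrib sum_subtractf algebra_simps)
  then show ?thesis using c False by (simp add: add_divide_distrib)
qed

text \<open>An average over an empty index set is \<open>0\<close> (division by zero), hence the guards on the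
  constant shifts.\<close>

lemma split_difference_decompose:
  fixes Jo Ja Jb :: "nat set" and z dd dm :: "nat \<Rightarrow> real" and \<mu> bd bm \<tau> :: real
  assumes f: "finite Jo" "finite Ja" "finite Jb" and c: "card Ja = card Jb"
  shows "(\<tau> * ((\<Sum>i\<in>Jo. \<mu> + z i + dd i) / card Jo) + (1-\<tau>) * ((\<Sum>i\<in>Ja. \<mu> + z i + dd i) / card Ja))
       - (\<tau> * ((\<Sum>i\<in>Jo. \<mu> + z i + dm i) / card Jo) + (1-\<tau>) * ((\<Sum>i\<in>Jb. \<mu> + z i + dm i) / card Jb))
     = (1-\<tau>) / card Ja * ((\<Sum>i\<in>Ja. z i) - (\<Sum>i\<in>Jb. z i))
       + (\<tau> * ((\<Sum>i\<in>Jo. dd i - bd) / card Jo - (\<Sum>i\<in>Jo. dm i - bm) / card Jo)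
       + (1-\<tau>) * ((\<Sum>i\<in>Ja. dd i - bd) / card Ja - (\<Sum>i\<in>Jb. dm i - bm) / card Jb)
       + (if Jo = {} then 0 else \<tau> * (bd - bm)) + (if Ja = {} then 0 else (1-\<tau>) * (bd - bm)))"
proof -
  have ab: "Ja = {} \<longleftrightarrow> Jb = {}" using f c by (metis card_eq_0_iff)
  show ?thesis
    unfolding average_shift_decompose[OF f(1), of \<mu> z dd bd] average_shift_decompose[OF f(2), of \<mu> z dd bd]
      average_shift_decompose[OF f(1), of \<mu> z dm bm] average_shift_decompose[OF f(3), of \<mu> z dm bm]
    using ab c by (simp add: diff_divide_distrib algebra_simps)
qed

lemma tendsto_mult_square_diff_0:
  fixes a w r :: "nat \<Rightarrow> real"
  assumes nonneg: "\<And>n. a n \<ge> 0" "\<And>n. w n \<ge> 0" "\<And>n. r n \<ge> 0"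
    and w: "(\<lambda>n. a n * (w n)\<^sup>2) \<longlonglongrightarrow> L" and r: "(\<lambda>n. a n * (r n)\<^sup>2) \<longlonglongrightarrow> L"
  shows "(\<lambda>n. a n * (w n - r n)\<^sup>2) \<longlonglongrightarrow> 0"
proof -
  have "L \<ge> 0"
    using nonneg by (intro LIMSEQ_le_const[OF w]) auto
  have "a n * w n * r n = sqrt ((a n * (w n)\<^sup>2) * (a n * (r n)\<^sup>2))" for n
  proof -
    have "(a n * (w n)\<^sup>2) * (a n * (r n)\<^sup>2) = (a n * w n * r n)\<^sup>2"
      by (simp add: power2_eq_square ac_simps)
    then show ?thesis
      using nonneg[of n] by simp
  qed
  moreover have "(\<lambda>n. sqrt ((a n * (w n)\<^sup>2) * (a n * (r n)\<^sup>2))) \<longlonglongrightarrow> sqrt (L * L)"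
    by (intro tendsto_intros w r)
  ultimately have wr: "(\<lambda>n. a n * w n * r n) \<longlonglongrightarrow> L"
    using \<open>L \<ge> 0\<close> by simp
  have "(\<lambda>n. a n * (w n)\<^sup>2 - 2 * (a n * w n * r n) + a n * (r n)\<^sup>2) \<longlonglongrightarrow> L - 2 * L + L"
    by (intro tendsto_intros w r wr)
  then show ?thesis
    by (simp add: power2_diff algebra_simps)
qed

section \<open>The cross-fitted statistic\<close>

locale cross_fitting = prob_space M
  for M :: "'a measure" +
  fixes MX :: "'x measure" and MY :: "'y measure"
    and R :: "nat \<Rightarrow> 'a \<Rightarrow> nat \<Rightarrow> real" and X :: "nat \<Rightarrow> 'a \<Rightarrow> 'x" and Y :: "nat \<Rightarrow> 'a \<Rightarrow> 'y"
    and P :: "((nat \<Rightarrow> real) \<times> 'x \<times> 'y) measure"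
    and l :: "'y \<Rightarrow> 'yh::real_normed_vector \<Rightarrow> real"
    and G :: "((nat \<Rightarrow> real) \<Rightarrow> 'yh) set"
    and dmax d K :: nat and tau :: real
    and gstar :: "(nat \<Rightarrow> real) \<Rightarrow> 'yh"
    and nrm :: "((nat \<Rightarrow> real) \<times> 'x \<times> 'y \<Rightarrow> 'yh) \<Rightarrow> real"
    and I Ia Ib Io :: "nat \<Rightarrow> nat \<Rightarrow> nat set"
    and phihat :: "nat \<Rightarrow> nat \<Rightarrow> (nat \<Rightarrow> 'x \<times> 'y) \<Rightarrow> 'x \<Rightarrow> nat \<Rightarrow> real"
    and ghat :: "nat \<Rightarrow> nat \<Rightarrow> nat \<Rightarrow> (nat \<Rightarrow> 'x \<times> 'y) \<Rightarrow> (nat \<Rightarrow> real) \<Rightarrow> 'yh"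
  assumes Z_meas: "\<And>i. (\<lambda>\<omega>. (R i \<omega>, X i \<omega>, Y i \<omega>)) \<in> measurable M (MR \<Otimes>\<^sub>M MX \<Otimes>\<^sub>M MY)"
    and Z_indep: "indep_vars (\<lambda>_. MR \<Otimes>\<^sub>M MX \<Otimes>\<^sub>M MY) (\<lambda>i \<omega>. (R i \<omega>, X i \<omega>, Y i \<omega>)) UNIV"
    and Z_law: "\<And>i. distr M (MR \<Otimes>\<^sub>M MX \<Otimes>\<^sub>M MY) (\<lambda>\<omega>. (R i \<omega>, X i \<omega>, Y i \<omega>)) = P"
    and l_meas: "(\<lambda>(y, yh). l y yh) \<in> borel_measurable (MY \<Otimes>\<^sub>M borel)"
    and gstar_meas: "gstar \<in> borel_measurable MR"
    and gstar_int: "integrable P (\<lambda>z. l (snd (snd z)) (gstar (fst z)))"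
    and gstar_square_int: "integrable P (\<lambda>z. (l (snd (snd z)) (gstar (fst z)))\<^sup>2)"
    and d: "dstar P l G dmax \<le> d" "d \<le> dmax"
    and K: "K > 0" and tau: "0 \<le> tau" "tau < 1"
    and folds_cover: "\<And>n. (\<Union>k<K. I n k) = {..<n}"
    and folds_disj: "\<And>n. disjoint_family_on (I n) {..<K}"
    and folds_size: "\<And>k. k < K \<Longrightarrow> (\<lambda>n. real (card (I n k)) / real n) \<longlonglongrightarrow> 1 / real K"
    and split_cover: "\<And>n k. k < K \<Longrightarrow> Ia n k \<union> Ib n k \<union> Io n k = I n k"
    and split_disj: "\<And>n k. k < K \<Longrightarrow>
      Ia n k \<inter> Ib n k = {} \<and> Ia n k \<inter> Io n k = {} \<and> Ib n k \<inter> Io n k = {}"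
    and split_ab: "\<And>n k. k < K \<Longrightarrow> card (Ia n k) = card (Ib n k)"
    and split_o: "\<And>k. k < K \<Longrightarrow>
      (\<lambda>n. real (card (Io n k)) / real (card (Ia n k) + card (Io n k))) \<longlonglongrightarrow> tau"
    and train_only: "\<And>n k D D'. k < K \<Longrightarrow> (\<forall>i\<in>{..<n} - I n k. D i = D' i) \<Longrightarrow>
      phihat n k D = phihat n k D' \<and> (\<forall>d'. ghat n k d' D = ghat n k d' D')"
    and ghat_in: "\<And>n k d' D. k < K \<Longrightarrow> d' \<le> dmax \<Longrightarrow> ghat n k d' D \<in> Gd G d'"
    and phihat_meas: "\<And>n k. k < K \<Longrightarrow> (\<lambda>(D, x). phihat n k D x)
      \<in> measurable (PiM UNIV (\<lambda>_. MX \<Otimes>\<^sub>M MY) \<Otimes>\<^sub>M MX) MR"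
    and ghat_meas: "\<And>n k d'. k < K \<Longrightarrow> d' \<le> dmax \<Longrightarrow> (\<lambda>(D, r). ghat n k d' D r)
      \<in> borel_measurable (PiM UNIV (\<lambda>_. MX \<Otimes>\<^sub>M MY) \<Otimes>\<^sub>M MR)"
    and C1: "\<And>d'. dstar P l G dmax \<le> d' \<Longrightarrow> d' \<le> dmax \<Longrightarrow> \<exists>C>0. \<forall>phs gs.
      (\<forall>j. phs j \<in> measurable MX MR \<and> gs j \<in> Gd G d') \<and>
      (\<lambda>j. nrm (\<lambda>z. gs j (phs j (fst (snd z))) - gstar (fst z))) \<longlonglongrightarrow> 0 \<longrightarrow>
      (\<forall>\<^sub>F j in sequentially.
         \<bar>\<integral>z. l (snd (snd z)) (gs j (phs j (fst (snd z)))) - l (snd (snd z)) (gstar (fst z)) \<partial>P\<bar>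
         \<le> C * (nrm (\<lambda>z. gs j (phs j (fst (snd z))) - gstar (fst z)))\<^sup>2)"
    and C2: "\<And>d' k. dstar P l G dmax \<le> d' \<Longrightarrow> d' \<le> dmax \<Longrightarrow> k < K \<Longrightarrow>
      small_oP M (\<lambda>n \<omega>. nrm (\<lambda>z. ghat n k d' (\<lambda>i. (X i \<omega>, Y i \<omega>))
                             (phihat n k (\<lambda>i. (X i \<omega>, Y i \<omega>)) (fst (snd z))) - gstar (fst z)))
                 (\<lambda>n. real n powr (-1/4))"
    and C3: "\<And>d' k. dstar P l G dmax \<le> d' \<Longrightarrow> d' \<le> dmax \<Longrightarrow> k < K \<Longrightarrow>
      small_oP1_enn M (\<lambda>n \<omega>. \<integral>\<^sup>+ z. ennreal
         ((l (snd (snd z)) (ghat n k d' (\<lambda>i. (X i \<omega>, Y i \<omega>))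
               (phihat n k (\<lambda>i. (X i \<omega>, Y i \<omega>)) (fst (snd z))))
           - l (snd (snd z)) (gstar (fst z)))\<^sup>2) \<partial>P)"
begin

abbreviation MZ :: "((nat \<Rightarrow> real) \<times> 'x \<times> 'y) measure" where
  "MZ \<equiv> MR \<Otimes>\<^sub>M MX \<Otimes>\<^sub>M MY"

abbreviation MD :: "(nat \<Rightarrow> 'x \<times> 'y) measure" where
  "MD \<equiv> PiM UNIV (\<lambda>_. MX \<Otimes>\<^sub>M MY)"

definition Z :: "nat \<Rightarrow> 'a \<Rightarrow> (nat \<Rightarrow> real) \<times> 'x \<times> 'y" where
  "Z i \<omega> = (R i \<omega>, X i \<omega>, Y i \<omega>)"

definition data :: "'a \<Rightarrow> nat \<Rightarrow> 'x \<times> 'y" where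
  "data \<omega> = (\<lambda>i. (X i \<omega>, Y i \<omega>))"

definition loss_star :: "(nat \<Rightarrow> real) \<times> 'x \<times> 'y \<Rightarrow> real" where
  "loss_star z = l (snd (snd z)) (gstar (fst z))"

definition mean_loss :: real where
  "mean_loss = (\<integral>z. loss_star z \<partial>P)"

definition var_loss :: real where
  "var_loss = (\<integral>z. (loss_star z - mean_loss)\<^sup>2 \<partial>P)"

definition centered_loss :: "nat \<Rightarrow> 'a \<Rightarrow> real" where
  "centered_loss i \<omega> = loss_star (Z i \<omega>) - mean_loss"

definition excess_loss :: "nat \<Rightarrow> nat \<Rightarrow> nat \<Rightarrow> (nat \<Rightarrow> 'x \<times> 'y) \<Rightarrow> (nat \<Rightarrow> real) \<times> 'x \<times> 'y \<Rightarrow> real"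
  where "excess_loss n k d' D z = l (snd (snd z)) (ghat n k d' D (phihat n k D (fst (snd z)))) - loss_star z"

definition bias :: "nat \<Rightarrow> nat \<Rightarrow> nat \<Rightarrow> 'a \<Rightarrow> real" where
  "bias n k d' \<omega> = (\<integral>z. excess_loss n k d' (data \<omega>) z \<partial>P)"

definition fluct :: "nat \<Rightarrow> nat \<Rightarrow> nat \<Rightarrow> nat set \<Rightarrow> 'a \<Rightarrow> real" where
  "fluct n k d' J \<omega> = (\<Sum>i\<in>J. excess_loss n k d' (data \<omega>) (Z i \<omega>) - bias n k d' \<omega>) / card J"

definition scale :: "nat \<Rightarrow> real" where
  "scale n = sqrt (real n / (2 - tau)) / real K"

lemma measurable_Z[measurable]: "Z i \<in> measurable M MZ"
  using Z_meas by (simp add: Z_def[abs_def])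

lemma distr_Z_MZ: "distr M MZ (Z i) = P"
  using Z_law by (simp add: Z_def[abs_def])

lemma sets_P: "sets P = sets MZ"
  using distr_Z_MZ[of 0] by (metis sets_distr)

lemma prob_space_P: "prob_space P"
  using prob_space_distr[OF measurable_Z[of 0]] by (simp add: distr_Z_MZ)

sublocale P: prob_space P
  by (rule prob_space_P)

lemma measurable_Z_P[measurable]: "Z i \<in> measurable M P"
  by (subst measurable_cong_sets[OF refl sets_P]) (rule measurable_Z)

lemma indep_vars_Z: "indep_vars (\<lambda>_. P) Z UNIV"
  using Z_indep measurable_Z_P unfolding indep_vars_def2 by (simp add: sets_P Z_def[abs_def])

lemma distr_Z: "distr M P (Z i) = P"
proof (rule measure_eqI)
  fix A assume "A \<in> sets (distr M P (Z i))"
  then have "A \<in> sets P" "A \<in> sets MZ" using sets_P by auto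
  then show "emeasure (distr M P (Z i)) A = emeasure P A"
    by (subst (2) distr_Z_MZ[symmetric]) (simp add: emeasure_distr)
qed simp

lemma measurable_X[measurable]: "X i \<in> measurable M MX"
proof -
  have "(\<lambda>\<omega>. fst (snd (Z i \<omega>))) \<in> measurable M MX" by measurable
  then show ?thesis by (simp add: Z_def)
qed

lemma measurable_Y[measurable]: "Y i \<in> measurable M MY"
proof -
  have "(\<lambda>\<omega>. snd (snd (Z i \<omega>))) \<in> measurable M MY" by measurable
  then show ?thesis by (simp add: Z_def)
qed

lemma measurable_data[measurable]: "data \<in> measurable M MD"
  unfolding data_def by (rule measurable_PiM_UNIV) simp

lemma measurable_loss[measurable]:
  "f \<in> measurable N MY \<Longrightarrow> g \<in> borel_measurable N \<Longrightarrow> (\<lambda>x. l (f x) (g x)) \<in> borel_measurable N"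
  using measurable_compose[OF measurable_Pair l_meas] by simp

lemma measurable_loss_star[measurable]: "loss_star \<in> borel_measurable P"
proof -
  have "loss_star \<in> borel_measurable MZ"
    unfolding loss_star_def[abs_def] using gstar_meas by measurable
  then show ?thesis by (simp add: measurable_cong_sets[OF sets_P refl])
qed

sublocale iid: iid_centered M centered_loss var_loss "distr M borel (centered_loss 0)"
proof unfold_locales
  have int_Z: "(\<integral>\<omega>. f (Z i \<omega>) \<partial>M) = (\<integral>z. f z \<partial>P)"
    and integrable_Z: "integrable M (\<lambda>\<omega>. f (Z i \<omega>)) \<longleftrightarrow> integrable P f"
    if [measurable]: "f \<in> borel_measurable P" for f :: "_ \<Rightarrow> real" and i
    using integral_distr[OF measurable_Z_P, of f i] integrable_distr_eq[OF measurable_Z_P, of f i]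
    by (simp_all add: distr_Z)
  have int: "integrable P loss_star" and "integrable P (\<lambda>z. (loss_star z)\<^sup>2)"
    using gstar_int gstar_square_int by (simp_all add: loss_star_def[abs_def])
  then have sq: "integrable P (\<lambda>z. (loss_star z - mean_loss)\<^sup>2)"
    by (simp add: power2_diff)
  show "indep_vars (\<lambda>_. borel) centered_loss UNIV"
    unfolding centered_loss_def[abs_def] by (rule indep_vars_compose2[OF indep_vars_Z]) simp
  show "integrable M (\<lambda>\<omega>. (centered_loss i \<omega>)\<^sup>2)" for i
    unfolding centered_loss_def using integrable_Z[of "\<lambda>z. (loss_star z - mean_loss)\<^sup>2" i] sq by simp
  show "expectation (centered_loss i) = 0" for i
    unfolding centered_loss_def using int_Z[of "\<lambda>z. loss_star z - mean_loss" i] int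
    by (simp add: mean_loss_def P.prob_space)
  show "expectation (\<lambda>\<omega>. (centered_loss i \<omega>)\<^sup>2) = var_loss" for i
    unfolding centered_loss_def var_loss_def using int_Z[of "\<lambda>z. (loss_star z - mean_loss)\<^sup>2" i] by simp
  have "distr M borel (centered_loss i) = distr (distr M P (Z i)) borel (\<lambda>z. loss_star z - mean_loss)" for i
    unfolding centered_loss_def[abs_def] by (subst distr_distr) (auto simp: comp_def)
  then show "distr M borel (centered_loss i) = distr M borel (centered_loss 0)" for i
    by (simp add: distr_Z)
qed

lemma measurable_excess_loss:
  assumes "k < K" "d' \<le> dmax" "f \<in> measurable N MD" "g \<in> measurable N P"
  shows "(\<lambda>x. excess_loss n k d' (f x) (g x)) \<in> borel_measurable N"
proof -
  have [measurable]: "g \<in> measurable N MZ"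
    using assms(4) by (simp add: measurable_cong_sets[OF refl sets_P])
  have [measurable]: "(\<lambda>x. phihat n k (f x) (fst (snd (g x)))) \<in> measurable N MR"
    using measurable_compose[OF _ phihat_meas[OF assms(1)], of "\<lambda>x. (f x, fst (snd (g x)))"] assms(3)
    by simp
  have [measurable]: "(\<lambda>x. ghat n k d' (f x) (phihat n k (f x) (fst (snd (g x))))) \<in> borel_measurable N"
    using measurable_compose[OF _ ghat_meas[OF assms(1,2)],
        of "\<lambda>x. (f x, phihat n k (f x) (fst (snd (g x))))"] assms(3)
    by simp
  have "(\<lambda>x. loss_star (g x)) \<in> borel_measurable N"
    using assms(4) by measurable
  then show ?thesis
    unfolding excess_loss_def by measurable
qed

lemma measurable_bias: "k < K \<Longrightarrow> d' \<le> dmax \<Longrightarrow> bias n k d' \<in> borel_measurable M"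
  unfolding bias_def
  by (rule P.borel_measurable_lebesgue_integral)
    (auto simp: case_prod_beta'
      intro!: measurable_excess_loss measurable_compose[OF measurable_fst measurable_data])

lemma finite_fold: "k < K \<Longrightarrow> finite (I n k)"
  using folds_cover[of n] by (metis UN_upper finite_lessThan finite_subset lessThan_iff)

lemma split_subset: "k < K \<Longrightarrow> Ia n k \<subseteq> I n k" "k < K \<Longrightarrow> Ib n k \<subseteq> I n k" "k < K \<Longrightarrow> Io n k \<subseteq> I n k"
  using split_cover by blast+

lemma finite_split: "k < K \<Longrightarrow> finite (Ia n k)" "k < K \<Longrightarrow> finite (Ib n k)" "k < K \<Longrightarrow> finite (Io n k)"
  using split_subset finite_fold finite_subset by metis+

lemma card_fold:
  assumes "k < K" shows "card (I n k) = 2 * card (Ia n k) + card (Io n k)"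
proof -
  have "card (I n k) = card (Ia n k) + card (Ib n k) + card (Io n k)"
    using split_cover[OF assms, of n, symmetric] split_disj[OF assms, of n] finite_split[OF assms, of n]
    by (simp add: card_Un_disjoint Int_Un_distrib2)
  then show ?thesis using split_ab[OF assms, of n] by simp
qed

lemma card_Ia_ratio: "k < K \<Longrightarrow> (\<lambda>n. real (card (Ia n k)) / real n) \<longlonglongrightarrow> (1 - tau) / (K * (2 - tau))"
  using split_ratios_tendsto(1)[OF K folds_size split_o tau card_fold] .

lemma card_Io_ratio: "k < K \<Longrightarrow> (\<lambda>n. real (card (Io n k)) / real n) \<longlonglongrightarrow> tau / (K * (2 - tau))"
  using split_ratios_tendsto(2)[OF K folds_size split_o tau card_fold] .

lemma excess_loss_held_out_representation:
  assumes k: "k < K" and d': "d' \<le> dmax" and JJ: "\<And>n. JJ n \<subseteq> I n k"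
  obtains F where "\<And>n. (\<lambda>(v, z). F n v z) \<in> borel_measurable (PiM (UNIV - JJ n) (\<lambda>_. P) \<Otimes>\<^sub>M P)"
    and "\<And>n \<omega>. F n (restrict (\<lambda>i. Z i \<omega>) (UNIV - JJ n)) = excess_loss n k d' (data \<omega>)"
proof -
  obtain \<omega>0 where \<omega>0: "\<omega>0 \<in> space M" using not_empty by blast
  define c0 where "c0 = data \<omega>0 0"
  have c0: "c0 \<in> space (MX \<Otimes>\<^sub>M MY)"
    using measurable_space[OF measurable_X \<omega>0] measurable_space[OF measurable_Y \<omega>0]
    by (auto simp: c0_def data_def space_pair_measure)
  \<comment> \<open>The rule fitted on fold \<open>k\<close> ignores the observations in \<open>JJ n\<close>, so they may be
     overwritten by the fixed point \<open>c0\<close>.\<close>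
  define dec where "dec n v = (\<lambda>i. if i \<in> JJ n then c0 else snd (v i))"
    for n and v :: "nat \<Rightarrow> (nat \<Rightarrow> real) \<times> 'x \<times> 'y"
  have snd_m: "snd \<in> measurable P (MX \<Otimes>\<^sub>M MY)"
    by (simp add: measurable_cong_sets[OF sets_P refl])
  have decm: "dec n \<in> measurable (PiM (UNIV - JJ n) (\<lambda>_. P)) MD" for n
    unfolding dec_def
  proof (rule measurable_PiM_UNIV)
    fix i
    show "(\<lambda>v. if i \<in> JJ n then c0 else snd (v i)) \<in> measurable (PiM (UNIV - JJ n) (\<lambda>_. P)) (MX \<Otimes>\<^sub>M MY)"
    proof (cases "i \<in> JJ n")
      case False
      then have "(\<lambda>v. v i) \<in> measurable (PiM (UNIV - JJ n) (\<lambda>_. P)) P"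
        by (intro measurable_component_singleton) auto
      from measurable_compose[OF this snd_m] False show ?thesis by simp
    qed (use c0 in simp)
  qed
  have "(\<lambda>(v, z). excess_loss n k d' (dec n v) z) \<in> borel_measurable (PiM (UNIV - JJ n) (\<lambda>_. P) \<Otimes>\<^sub>M P)" for n
    unfolding case_prod_beta' by (rule measurable_excess_loss[OF k d']) (use decm in measurable)
  moreover have "excess_loss n k d' (dec n (restrict (\<lambda>i. Z i \<omega>) (UNIV - JJ n)))
      = excess_loss n k d' (data \<omega>)" for n \<omega>
  proof -
    have "\<forall>i\<in>{..<n} - I n k. dec n (restrict (\<lambda>i. Z i \<omega>) (UNIV - JJ n)) i = data \<omega> i"
      using JJ by (auto simp: dec_def data_def Z_def)
    from train_only[OF k this] show ?thesis
      by (intro ext) (simp add: excess_loss_def)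
  qed
  ultimately show ?thesis
    by (rule that)
qed

lemma oP1_scaled_fluct:
  assumes k: "k < K" and d': "dstar P l G dmax \<le> d'" "d' \<le> dmax" and JJ: "\<And>n. JJ n \<subseteq> I n k"
    and B: "B > 0" and size: "eventually (\<lambda>n. real n \<le> B * real (card (JJ n))) sequentially"
  shows "oP1 M (\<lambda>n \<omega>. (scale n * w) * fluct n k d' (JJ n) \<omega>)"
proof -
  obtain F where Fm: "\<And>n. (\<lambda>(v, z). F n v z) \<in> borel_measurable (PiM (UNIV - JJ n) (\<lambda>_. P) \<Otimes>\<^sub>M P)"
    and Feq: "\<And>n \<omega>. F n (restrict (\<lambda>i. Z i \<omega>) (UNIV - JJ n)) = excess_loss n k d' (data \<omega>)"
    using excess_loss_held_out_representation[OF k d'(2) JJ] by blast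
  have fin: "finite (JJ n)" for n
    using finite_subset[OF JJ finite_fold[OF k]] .
  have scale: "(scale n * w)\<^sup>2 \<le> w\<^sup>2 / ((2 - tau) * (real K)\<^sup>2) * real n" for n
    using tau by (simp add: scale_def power_mult_distrib power_divide mult.commute)
  have q: "(\<lambda>n. measure M {\<omega>\<in>space M. ennreal \<delta> <
      (\<integral>\<^sup>+z. ennreal ((F n (restrict (\<lambda>i. Z i \<omega>) (UNIV - JJ n)) z)\<^sup>2) \<partial>P)}) \<longlonglongrightarrow> 0" if "\<delta> > 0" for \<delta>
    using C3[OF d' k] that unfolding small_oP1_enn_def
    by (simp add: Feq excess_loss_def loss_star_def data_def)
  have "oP1 M (\<lambda>n \<omega>. (scale n * w) * ((\<Sum>i\<in>JJ n. F n (restrict (\<lambda>i. Z i \<omega>) (UNIV - JJ n)) (Z i \<omega>)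
      - (\<integral>z. F n (restrict (\<lambda>i. Z i \<omega>) (UNIV - JJ n)) z \<partial>P)) / card (JJ n)))"
    by (rule oP1_scaled_held_out_deviation[OF prob_space_P indep_vars_Z distr_Z fin Fm _ scale B size q])
      (use tau in simp)
  then show ?thesis
    by (rule oP1_cong) (simp add: Feq fluct_def bias_def)
qed

lemma oP1_sqrt_mult_bias:
  assumes k: "k < K" and d': "dstar P l G dmax \<le> d'" "d' \<le> dmax"
  shows "oP1 M (\<lambda>n \<omega>. sqrt n * bias n k d' \<omega>)"
proof -
  define err where "err ph g = nrm (\<lambda>z. g (ph (fst (snd z))) - gstar (fst z))"
    for ph :: "'x \<Rightarrow> nat \<Rightarrow> real" and g :: "(nat \<Rightarrow> real) \<Rightarrow> 'yh"
  define risk_gap where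
    "risk_gap ph g = (\<integral>z. l (snd (snd z)) (g (ph (fst (snd z)))) - l (snd (snd z)) (gstar (fst z)) \<partial>P)"
    for ph :: "'x \<Rightarrow> nat \<Rightarrow> real" and g :: "(nat \<Rightarrow> real) \<Rightarrow> 'yh"
  obtain C where C: "C > 0" and sequential: "\<forall>phs gs.
      (\<forall>j. phs j \<in> measurable MX MR \<and> gs j \<in> Gd G d') \<and> (\<lambda>j. err (phs j) (gs j)) \<longlonglongrightarrow> 0 \<longrightarrow>
      eventually (\<lambda>j. \<bar>risk_gap (phs j) (gs j)\<bar> \<le> C * (err (phs j) (gs j))\<^sup>2) sequentially"
    using C1[OF d'] unfolding err_def risk_gap_def by blast
  obtain \<eta> where \<eta>: "\<eta> > 0" and local_bound: "\<And>ph g. ph \<in> measurable MX MR \<Longrightarrow> g \<in> Gd G d' \<Longrightarrow>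
      \<bar>err ph g\<bar> < \<eta> \<Longrightarrow> \<bar>risk_gap ph g\<bar> \<le> C * (err ph g)\<^sup>2"
    using bound_near_zero_if_sequential_bound[where Q="\<lambda>ph g. ph \<in> measurable MX MR \<and> g \<in> Gd G d'",
        OF sequential] by blast
  show ?thesis
  proof (rule oP1_sqrt_mult_if_locally_quadratic[OF C2[OF d' k] _ less_imp_le[OF C] \<eta>])
    show "bias n k d' \<in> borel_measurable M" for n
      using measurable_bias[OF k d'(2)] .
    fix n \<omega> assume \<omega>: "\<omega> \<in> space M"
    have "phihat n k (data \<omega>) \<in> measurable MX MR"
      using measurable_Pair2[OF phihat_meas[OF k] measurable_space[OF measurable_data \<omega>]] by simp
    moreover have "ghat n k d' (data \<omega>) \<in> Gd G d'"
      using ghat_in[OF k d'(2)] .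
    ultimately show "\<bar>bias n k d' \<omega>\<bar> \<le> C * (nrm (\<lambda>z. ghat n k d' (\<lambda>i. (X i \<omega>, Y i \<omega>))
        (phihat n k (\<lambda>i. (X i \<omega>, Y i \<omega>)) (fst (snd z))) - gstar (fst z)))\<^sup>2"
      if "\<bar>nrm (\<lambda>z. ghat n k d' (\<lambda>i. (X i \<omega>, Y i \<omega>))
        (phihat n k (\<lambda>i. (X i \<omega>, Y i \<omega>)) (fst (snd z))) - gstar (fst z))\<bar> < \<eta>"
      using local_bound that by (simp add: bias_def excess_loss_def loss_star_def data_def err_def risk_gap_def)
  qed
qed

definition stat :: "nat \<Rightarrow> 'a \<Rightarrow> real" where
  "stat n \<omega> = sqrt (real n / (2 - tau)) * ((1 / real K) * (\<Sum>k<K.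
     let D = (\<lambda>i. (X i \<omega>, Y i \<omega>)); ph = phihat n k D;
         gd = ghat n k d D; gm = ghat n k dmax D
     in (tau * emp_loss l ph gd D (Io n k) + (1 - tau) * emp_loss l ph gd D (Ia n k))
        - (tau * emp_loss l ph gm D (Io n k) + (1 - tau) * emp_loss l ph gm D (Ib n k))))"

definition main_term :: "nat \<Rightarrow> 'a \<Rightarrow> real" where
  "main_term n \<omega> = (\<Sum>k<K. scale n * (1 - tau) / card (Ia n k) *
     ((\<Sum>i\<in>Ia n k. centered_loss i \<omega>) - (\<Sum>i\<in>Ib n k. centered_loss i \<omega>)))"

definition remainder :: "nat \<Rightarrow> 'a \<Rightarrow> real" where
  "remainder n \<omega> = (\<Sum>k<K. scale n *
     (tau * (fluct n k d (Io n k) \<omega> - fluct n k dmax (Io n k) \<omega>)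
      + (1 - tau) * (fluct n k d (Ia n k) \<omega> - fluct n k dmax (Ib n k) \<omega>)
      + (if Io n k = {} then 0 else tau * (bias n k d \<omega> - bias n k dmax \<omega>))
      + (if Ia n k = {} then 0 else (1 - tau) * (bias n k d \<omega> - bias n k dmax \<omega>))))"

lemma emp_loss_eq:
  "emp_loss l (phihat n k (data \<omega>)) (ghat n k d' (data \<omega>)) (data \<omega>) J
     = (\<Sum>i\<in>J. mean_loss + centered_loss i \<omega> + excess_loss n k d' (data \<omega>) (Z i \<omega>)) / card J"
  by (simp add: emp_loss_def centered_loss_def excess_loss_def data_def Z_def)

lemma stat_eq: "stat n \<omega> = main_term n \<omega> + remainder n \<omega>"
proof -
  have "(let D = (\<lambda>i. (X i \<omega>, Y i \<omega>)); ph = phihat n k D; gd = ghat n k d D; gm = ghat n k dmax D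
     in (tau * emp_loss l ph gd D (Io n k) + (1 - tau) * emp_loss l ph gd D (Ia n k))
        - (tau * emp_loss l ph gm D (Io n k) + (1 - tau) * emp_loss l ph gm D (Ib n k)))
    = (1 - tau) / card (Ia n k) * ((\<Sum>i\<in>Ia n k. centered_loss i \<omega>) - (\<Sum>i\<in>Ib n k. centered_loss i \<omega>))
      + (tau * (fluct n k d (Io n k) \<omega> - fluct n k dmax (Io n k) \<omega>)
      + (1 - tau) * (fluct n k d (Ia n k) \<omega> - fluct n k dmax (Ib n k) \<omega>)
      + (if Io n k = {} then 0 else tau * (bias n k d \<omega> - bias n k dmax \<omega>))
      + (if Ia n k = {} then 0 else (1 - tau) * (bias n k d \<omega> - bias n k dmax \<omega>)))"
    if "k \<in> {..<K}" for k
    unfolding Let_def data_def[symmetric] emp_loss_eq fluct_def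
    by (rule split_difference_decompose) (use finite_split split_ab that in auto)
  then show ?thesis
    unfolding stat_def main_term_def remainder_def
    by (simp add: scale_def sum.distrib sum_distrib_left distrib_left mult.assoc)
qed

lemma oP1_scaled_fluct_diff:
  assumes k: "k < K" and JJ: "\<And>n. JJ n \<subseteq> I n k" "\<And>n. JJ' n \<subseteq> I n k"
    and B: "B > 0" and size: "eventually (\<lambda>n. real n \<le> B * real (card (JJ n))) sequentially"
      "eventually (\<lambda>n. real n \<le> B * real (card (JJ' n))) sequentially"
  shows "oP1 M (\<lambda>n \<omega>. scale n * (w * (fluct n k d (JJ n) \<omega> - fluct n k dmax (JJ' n) \<omega>)))"
proof -
  have "oP1 M (\<lambda>n \<omega>. (scale n * w) * fluct n k d (JJ n) \<omega>)"
    by (rule oP1_scaled_fluct[OF k d JJ(1) B size(1)])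
  moreover have "oP1 M (\<lambda>n \<omega>. (scale n * - w) * fluct n k dmax (JJ' n) \<omega>)"
    by (rule oP1_scaled_fluct[OF k _ order_refl JJ(2) B size(2)]) (use d in simp)
  ultimately have "oP1 M (\<lambda>n \<omega>. (scale n * w) * fluct n k d (JJ n) \<omega>
      + (scale n * - w) * fluct n k dmax (JJ' n) \<omega>)"
    by (rule oP1_add[OF finite_measure_axioms])
  then show ?thesis
    by (rule oP1_cong) (simp add: algebra_simps)
qed

lemma oP1_scaled_bias_diff:
  assumes k: "k < K"
  shows "oP1 M (\<lambda>n \<omega>. scale n * (t * (bias n k d \<omega> - bias n k dmax \<omega>)))"
proof -
  have "oP1 M (\<lambda>n \<omega>. sqrt n * bias n k d \<omega> + (-1) * (sqrt n * bias n k dmax \<omega>))"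
    using d by (intro oP1_add[OF finite_measure_axioms] oP1_cmult oP1_sqrt_mult_bias[OF k]) auto
  from oP1_cmult[OF this, of "t / (sqrt (2 - tau) * real K)"]
  show ?thesis
    by (rule oP1_cong) (simp add: scale_def real_sqrt_divide field_simps)
qed

lemma oP1_remainder_fold:
  assumes k: "k < K"
  shows "oP1 M (\<lambda>n \<omega>. scale n *
     (tau * (fluct n k d (Io n k) \<omega> - fluct n k dmax (Io n k) \<omega>)
      + (1 - tau) * (fluct n k d (Ia n k) \<omega> - fluct n k dmax (Ib n k) \<omega>)
      + (if Io n k = {} then 0 else tau * (bias n k d \<omega> - bias n k dmax \<omega>))
      + (if Ia n k = {} then 0 else (1 - tau) * (bias n k d \<omega> - bias n k dmax \<omega>))))"
proof -
  define \<alpha> where "\<alpha> = (1 - tau) / (K * (2 - tau))"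
  have "\<alpha> > 0" using tau K by (simp add: \<alpha>_def)
  have size_a: "eventually (\<lambda>n. real n \<le> (2 / \<alpha>) * real (card (Ia n k))) sequentially"
    using eventually_le_mult_if_ratio_tendsto[OF card_Ia_ratio[OF k, folded \<alpha>_def] \<open>\<alpha> > 0\<close>] .
  have size_b: "eventually (\<lambda>n. real n \<le> (2 / \<alpha>) * real (card (Ib n k))) sequentially"
    using size_a split_ab[OF k] by simp
  have o: "oP1 M (\<lambda>n \<omega>. scale n * (tau * (fluct n k d (Io n k) \<omega> - fluct n k dmax (Io n k) \<omega>)))"
  proof (cases "tau = 0")
    case True
    then show ?thesis by (simp add: oP1_zero)
  next
    case False
    define \<beta> where "\<beta> = tau / (K * (2 - tau))"
    have "\<beta> > 0" using tau K False by (simp add: \<beta>_def)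
    have size_o: "eventually (\<lambda>n. real n \<le> (2 / \<beta>) * real (card (Io n k))) sequentially"
      using eventually_le_mult_if_ratio_tendsto[OF card_Io_ratio[OF k, folded \<beta>_def] \<open>\<beta> > 0\<close>] .
    show ?thesis
      by (rule oP1_scaled_fluct_diff[OF k _ _ _ size_o size_o]) (use split_subset[OF k] \<open>\<beta> > 0\<close> in auto)
  qed
  have ab: "oP1 M (\<lambda>n \<omega>. scale n * ((1 - tau) * (fluct n k d (Ia n k) \<omega> - fluct n k dmax (Ib n k) \<omega>)))"
    by (intro oP1_scaled_fluct_diff[OF k _ _ _ size_a size_b]) (use split_subset[OF k] \<open>\<alpha> > 0\<close> in auto)
  have bias_o: "oP1 M (\<lambda>n \<omega>. scale n * (if Io n k = {} then 0 else tau * (bias n k d \<omega> - bias n k dmax \<omega>)))"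
    by (rule oP1_dominated[OF finite_measure_axioms oP1_scaled_bias_diff[OF k, of tau]])
      (use k d measurable_bias in \<open>auto simp: abs_mult\<close>)
  have bias_a: "oP1 M (\<lambda>n \<omega>. scale n * (if Ia n k = {} then 0 else (1 - tau) * (bias n k d \<omega> - bias n k dmax \<omega>)))"
    by (rule oP1_dominated[OF finite_measure_axioms oP1_scaled_bias_diff[OF k, of "1 - tau"]])
      (use k d measurable_bias in \<open>auto simp: abs_mult\<close>)
  show ?thesis
    unfolding distrib_left by (intro oP1_add[OF finite_measure_axioms] o ab bias_o bias_a)
qed

lemma oP1_remainder: "oP1 M remainder"
  unfolding remainder_def using oP1_remainder_fold by (intro oP1_sum[OF finite_measure_axioms]) auto

lemma disjoint_family_Ia_Ib: "disjoint_family_on (\<lambda>k. Ia n k \<union> Ib n k) {..<K}"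
  unfolding disjoint_family_on_def
proof (intro ballI impI)
  fix k k' assume k: "k \<in> {..<K}" "k' \<in> {..<K}" "k \<noteq> k'"
  then have "I n k \<inter> I n k' = {}"
    using folds_disj[of n] unfolding disjoint_family_on_def by blast
  moreover have "Ia n k \<union> Ib n k \<subseteq> I n k" "Ia n k' \<union> Ib n k' \<subseteq> I n k'"
    using split_subset k by auto
  ultimately show "(Ia n k \<union> Ib n k) \<inter> (Ia n k' \<union> Ib n k') = {}"
    by blast
qed

lemma Ia_Ib_disjoint: "k < K \<Longrightarrow> Ia n k \<inter> Ib n k = {}"
  using split_disj by blast

lemma second_moment_main_term:
  "integrable M (\<lambda>\<omega>. (main_term n \<omega>)\<^sup>2)"
  "expectation (\<lambda>\<omega>. (main_term n \<omega>)\<^sup>2)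
     = (\<Sum>k<K. 2 * real (card (Ia n k)) * (scale n * (1 - tau) / card (Ia n k))\<^sup>2) * var_loss"
  unfolding main_term_def
  by (rule iid.square_weighted_sum_diff[OF _ _ disjoint_family_Ia_Ib Ia_Ib_disjoint split_ab];
      simp add: finite_split)+

lemma measurable_main_term[measurable]: "main_term n \<in> borel_measurable M"
  unfolding main_term_def by measurable

lemma oP1_main_term_degenerate: "var_loss = 0 \<Longrightarrow> oP1 M main_term"
  by (rule oP1_if_second_moment_tendsto_0[OF prob_space_axioms measurable_main_term
        second_moment_main_term(1)])
    (simp add: second_moment_main_term(2))

definition card_Ia_total :: "nat \<Rightarrow> nat" where
  "card_Ia_total n = (\<Sum>k<K. card (Ia n k))"

lemma card_Ia_total_ratio: "(\<lambda>n. real (card_Ia_total n) / real n) \<longlonglongrightarrow> K * ((1 - tau) / (K * (2 - tau)))"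
proof -
  have "(\<lambda>n. \<Sum>k<K. real (card (Ia n k)) / real n) \<longlonglongrightarrow> (\<Sum>k<K. (1 - tau) / (K * (2 - tau)))"
    by (intro tendsto_sum) (simp add: card_Ia_ratio)
  then show ?thesis
    by (simp add: card_Ia_total_def sum_divide_distrib)
qed

lemma eventually_card_Ia_pos:
  assumes "k < K" shows "eventually (\<lambda>n. 0 < card (Ia n k)) sequentially"
proof -
  have "eventually (\<lambda>n. 0 < real (card (Ia n k)) / real n) sequentially"
    by (rule order_tendstoD(1)[OF card_Ia_ratio[OF assms]]) (use tau K in simp)
  then show ?thesis
    by eventually_elim (auto simp: zero_less_divide_iff)
qed

lemma tendsto_card_Ia_mult_weight_square:
  assumes k: "k < K"
  shows "(\<lambda>n. card (Ia n k) * (scale n * (1 - tau) / card (Ia n k))\<^sup>2) \<longlonglongrightarrow> (1 - tau) / K"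
proof -
  define c where "c = (1 - tau)\<^sup>2 / ((2 - tau) * (real K)\<^sup>2)"
  have "(\<lambda>n. c / (card (Ia n k) / n)) \<longlonglongrightarrow> c / ((1 - tau) / (K * (2 - tau)))"
    by (intro tendsto_intros card_Ia_ratio[OF k]) (use tau K in simp)
  moreover have "c / ((1 - tau) / (K * (2 - tau))) = (1 - tau) / K"
    using tau K by (simp add: c_def power2_eq_square)
  moreover have "eventually (\<lambda>n. c / (card (Ia n k) / n)
      = card (Ia n k) * (scale n * (1 - tau) / card (Ia n k))\<^sup>2) sequentially"
  proof (rule eventually_mono[OF eventually_card_Ia_pos[OF k]])
    fix n assume "0 < card (Ia n k)"
    then have "card (Ia n k) * (scale n * (1 - tau) / card (Ia n k))\<^sup>2 = (scale n)\<^sup>2 * (1 - tau)\<^sup>2 / card (Ia n k)"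
      by (simp add: power_divide power_mult_distrib power2_eq_square[of "real (card (Ia n k))"])
    also have "(scale n)\<^sup>2 = n / ((2 - tau) * (real K)\<^sup>2)"
      using tau by (simp add: scale_def power_divide)
    finally show "c / (card (Ia n k) / n) = card (Ia n k) * (scale n * (1 - tau) / card (Ia n k))\<^sup>2"
      by (simp add: c_def)
  qed
  ultimately show ?thesis
    using Lim_transform_eventually by fastforce
qed

lemma tendsto_card_Ia_mult_normaliser_square:
  assumes k: "k < K" and "var_loss > 0"
  shows "(\<lambda>n. card (Ia n k) * (sqrt (2 * (1 - tau) * var_loss) / sqrt (2 * var_loss * card_Ia_total n))\<^sup>2)
    \<longlonglongrightarrow> (1 - tau) / K"
proof -
  define \<alpha> where "\<alpha> = (1 - tau) / (K * (2 - tau))"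
  have "\<alpha> > 0" using tau K by (simp add: \<alpha>_def)
  have normaliser_square: "(sqrt (2 * (1 - tau) * var_loss) / sqrt (2 * var_loss * x))\<^sup>2 = (1 - tau) / x"
    if "x \<ge> 0" for x
    using tau assms(2) that by (cases "x = 0") (simp_all add: power_divide field_simps)
  have "(\<lambda>n. (1 - tau) * ((card (Ia n k) / n) / (card_Ia_total n / n))) \<longlonglongrightarrow> (1 - tau) * (\<alpha> / (K * \<alpha>))"
    using card_Ia_ratio[OF k] card_Ia_total_ratio \<open>\<alpha> > 0\<close> K
    by (intro tendsto_intros) (auto simp: \<alpha>_def)
  moreover have "(1 - tau) * (\<alpha> / (K * \<alpha>)) = (1 - tau) / K"
    using \<open>\<alpha> > 0\<close> by simp
  moreover have "eventually (\<lambda>n. (1 - tau) * ((card (Ia n k) / n) / (card_Ia_total n / n))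
      = card (Ia n k) * (sqrt (2 * (1 - tau) * var_loss) / sqrt (2 * var_loss * card_Ia_total n))\<^sup>2) sequentially"
    using eventually_gt_at_top[of 0] by eventually_elim (subst normaliser_square, simp_all)
  ultimately show ?thesis
    using Lim_transform_eventually by fastforce
qed

lemma weak_conv_main_term:
  assumes "var_loss > 0"
  shows "weak_conv_m (\<lambda>n. distr M borel (main_term n)) (gauss0 (2 * (1 - tau) * var_loss))"
proof -
  have "filterlim card_Ia_total at_top sequentially"
    by (rule filterlim_at_top_if_ratio_tendsto[OF card_Ia_total_ratio]) (use K tau in simp)
  moreover have "(\<lambda>n. card (Ia n k) * (scale n * (1 - tau) / card (Ia n k)
      - sqrt (2 * (1 - tau) * var_loss) / sqrt (2 * var_loss * card_Ia_total n))\<^sup>2) \<longlonglongrightarrow> 0" if "k < K" for k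
    using tendsto_card_Ia_mult_weight_square[OF that] tendsto_card_Ia_mult_normaliser_square[OF that assms]
    by (intro tendsto_mult_square_diff_0) (use tau assms in \<open>auto simp: scale_def\<close>)
  ultimately show ?thesis
    unfolding main_term_def card_Ia_total_def
    by (intro iid.weak_conv_weighted_sum_diff[OF assms _ _ _ disjoint_family_Ia_Ib Ia_Ib_disjoint split_ab])
      (use tau assms in \<open>simp_all add: finite_split\<close>)
qed

lemma weak_conv_stat: "weak_conv_m (\<lambda>n. distr M borel (stat n)) (gauss0 (2 * (1 - tau) * var_loss))"
proof (cases "var_loss = 0")
  case True
  have "weak_conv_m (\<lambda>n. distr M borel (\<lambda>\<omega>. 0)) (gauss0 0)"
    by (simp add: gauss0_def weak_conv_m_def weak_conv_def)
  from weak_conv_m_add_oP1[OF _ this real_distribution_gauss0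
      oP1_add[OF finite_measure_axioms oP1_main_term_degenerate[OF True] oP1_remainder]]
  show ?thesis by (simp add: True stat_eq[abs_def])
next
  case False
  then have "var_loss > 0" using iid.s2_nonneg by simp
  from weak_conv_m_add_oP1[OF _ weak_conv_main_term[OF this] real_distribution_gauss0 oP1_remainder]
  show ?thesis by (simp add: stat_eq[abs_def])
qed

end

theorem theorem1:
  fixes M :: "'a measure" and MX :: "'x measure" and MY :: "'y measure"
    and R :: "nat \<Rightarrow> 'a \<Rightarrow> nat \<Rightarrow> real" and X :: "nat \<Rightarrow> 'a \<Rightarrow> 'x" and Y :: "nat \<Rightarrow> 'a \<Rightarrow> 'y"
    and P :: "((nat \<Rightarrow> real) \<times> 'x \<times> 'y) measure"
    and l :: "'y \<Rightarrow> 'yh::real_normed_vector \<Rightarrow> real"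
    and G :: "((nat \<Rightarrow> real) \<Rightarrow> 'yh) set"
    and dmax d K :: nat and tau :: real
    and gstar :: "(nat \<Rightarrow> real) \<Rightarrow> 'yh"
    and nrm :: "((nat \<Rightarrow> real) \<times> 'x \<times> 'y \<Rightarrow> 'yh) \<Rightarrow> real"
    and I Ia Ib Io :: "nat \<Rightarrow> nat \<Rightarrow> nat set"
    and phihat :: "nat \<Rightarrow> nat \<Rightarrow> (nat \<Rightarrow> 'x \<times> 'y) \<Rightarrow> 'x \<Rightarrow> nat \<Rightarrow> real"
    and ghat :: "nat \<Rightarrow> nat \<Rightarrow> nat \<Rightarrow> (nat \<Rightarrow> 'x \<times> 'y) \<Rightarrow> (nat \<Rightarrow> real) \<Rightarrow> 'yh"
  assumes M: "prob_space M"
    (* Z_i = (R_i, X_i, Y_i) i.i.d. with law P *)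
    and Z_meas: "\<forall>i. (\<lambda>\<omega>. (R i \<omega>, X i \<omega>, Y i \<omega>)) \<in> measurable M (MR \<Otimes>\<^sub>M MX \<Otimes>\<^sub>M MY)"
    and Z_indep: "prob_space.indep_vars M (\<lambda>_. MR \<Otimes>\<^sub>M MX \<Otimes>\<^sub>M MY)
                    (\<lambda>i \<omega>. (R i \<omega>, X i \<omega>, Y i \<omega>)) UNIV"
    and Z_law: "\<forall>i. distr M (MR \<Otimes>\<^sub>M MX \<Otimes>\<^sub>M MY) (\<lambda>\<omega>. (R i \<omega>, X i \<omega>, Y i \<omega>)) = P"
    (* loss, model class *)
    and l_meas: "(\<lambda>(y, yh). l y yh) \<in> borel_measurable (MY \<Otimes>\<^sub>M borel)"
    and G_meas: "G \<subseteq> borel_measurable MR"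
    and G_dom: "G \<subseteq> Gd G dmax"
    and G_int: "\<forall>g\<in>G. integrable P (\<lambda>z. l (snd (snd z)) (g (fst z)))"
    and attained: "\<forall>d'\<le>dmax. \<exists>g\<in>Gd G d'. \<forall>g'\<in>Gd G d'. risk P l g \<le> risk P l g'"
    and gstar: "gstar \<in> Gd G (dstar P l G dmax)"
               "risk P l gstar = Lmin P l G (dstar P l G dmax)"
    and var_fin: "integrable P (\<lambda>z. (l (snd (snd z)) (gstar (fst z)))\<^sup>2)"
    (* null hypothesis *)
    and d: "dstar P l G dmax \<le> d" "d \<le> dmax"
    and K: "K \<ge> 2" and tau: "0 \<le> tau" "tau < 1"
    (* folds *)
    and folds_cover: "\<forall>n. (\<Union>k<K. I n k) = {..<n}"
    and folds_disj: "\<forall>n. disjoint_family_on (I n) {..<K}"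
    and folds_size: "\<forall>k<K. (\<lambda>n. real (card (I n k)) / real n) \<longlonglongrightarrow> 1 / real K"
    and split_cover: "\<forall>n. \<forall>k<K. Ia n k \<union> Ib n k \<union> Io n k = I n k"
    and split_disj: "\<forall>n. \<forall>k<K. Ia n k \<inter> Ib n k = {} \<and> Ia n k \<inter> Io n k = {} \<and> Ib n k \<inter> Io n k = {}"
    and split_ab: "\<forall>n. \<forall>k<K. card (Ia n k) = card (Ib n k)"
    and split_o: "\<forall>k<K. (\<lambda>n. real (card (Io n k)) / real (card (Ia n k) + card (Io n k))) \<longlonglongrightarrow> tau"
    (* estimators use only the training data I_{-k} *)
    and train_only: "\<forall>n. \<forall>k<K. \<forall>D D'. (\<forall>i\<in>{..<n} - I n k. D i = D' i) \<longrightarrow>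
                        phihat n k D = phihat n k D' \<and> (\<forall>d'. ghat n k d' D = ghat n k d' D')"
    and ghat_in: "\<forall>n. \<forall>k<K. \<forall>d'\<le>dmax. \<forall>D. ghat n k d' D \<in> Gd G d'"
    and phihat_meas: "\<forall>n. \<forall>k<K. (\<lambda>(D, x). phihat n k D x)
                        \<in> measurable (PiM UNIV (\<lambda>_. MX \<Otimes>\<^sub>M MY) \<Otimes>\<^sub>M MX) MR"
    and ghat_meas: "\<forall>n. \<forall>k<K. \<forall>d'\<le>dmax. (\<lambda>(D, r). ghat n k d' D r)
                        \<in> borel_measurable (PiM UNIV (\<lambda>_. MX \<Otimes>\<^sub>M MY) \<Otimes>\<^sub>M MR)"
    (* (C1) *)
    and C1: "\<forall>d'. dstar P l G dmax \<le> d' \<and> d' \<le> dmax \<longrightarrow> (\<exists>C>0. \<forall>phs gs.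
               (\<forall>j. phs j \<in> measurable MX MR \<and> gs j \<in> Gd G d') \<and>
               (\<lambda>j. nrm (\<lambda>z. gs j (phs j (fst (snd z))) - gstar (fst z))) \<longlonglongrightarrow> 0 \<longrightarrow>
               (\<forall>\<^sub>F j in sequentially.
                  \<bar>\<integral>z. l (snd (snd z)) (gs j (phs j (fst (snd z)))) - l (snd (snd z)) (gstar (fst z)) \<partial>P\<bar>
                  \<le> C * (nrm (\<lambda>z. gs j (phs j (fst (snd z))) - gstar (fst z)))\<^sup>2))"
    (* (C2) *)
    and C2: "\<forall>d'. dstar P l G dmax \<le> d' \<and> d' \<le> dmax \<longrightarrow> (\<forall>k<K.
               small_oP M (\<lambda>n \<omega>. nrm (\<lambda>z. ghat n k d' (\<lambda>i. (X i \<omega>, Y i \<omega>))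
                                  (phihat n k (\<lambda>i. (X i \<omega>, Y i \<omega>)) (fst (snd z))) - gstar (fst z)))
                          (\<lambda>n. real n powr (-1/4)))"
    (* (C3) *)
    and C3: "\<forall>d'. dstar P l G dmax \<le> d' \<and> d' \<le> dmax \<longrightarrow> (\<forall>k<K.
               small_oP1_enn M (\<lambda>n \<omega>. \<integral>\<^sup>+ z. ennreal
                  ((l (snd (snd z)) (ghat n k d' (\<lambda>i. (X i \<omega>, Y i \<omega>))
                        (phihat n k (\<lambda>i. (X i \<omega>, Y i \<omega>)) (fst (snd z))))
                    - l (snd (snd z)) (gstar (fst z)))\<^sup>2) \<partial>P))"
  shows "weak_conv_m
           (\<lambda>n. distr M borel (\<lambda>\<omega>.
              sqrt (real n / (2 - tau)) *
              ((1 / real K) * (\<Sum>k<K.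
                 let D = (\<lambda>i. (X i \<omega>, Y i \<omega>)); ph = phihat n k D;
                     gd = ghat n k d D; gm = ghat n k dmax D
                 in (tau * emp_loss l ph gd D (Io n k) + (1 - tau) * emp_loss l ph gd D (Ia n k))
                    - (tau * emp_loss l ph gm D (Io n k) + (1 - tau) * emp_loss l ph gm D (Ib n k))))))
           (gauss0 (2 * (1 - tau) *
              (\<integral>z. (l (snd (snd z)) (gstar (fst z)) - (\<integral>w. l (snd (snd w)) (gstar (fst w)) \<partial>P))\<^sup>2 \<partial>P)))"
proof -
  have "gstar \<in> G"
    using gstar(1) by (simp add: Gd_def)
  then have "gstar \<in> borel_measurable MR" "integrable P (\<lambda>z. l (snd (snd z)) (gstar (fst z)))"
    using G_meas G_int by auto
  moreover have "K > 0"
    using K by simp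
  ultimately interpret cross_fitting M MX MY R X Y P l G dmax d K tau gstar nrm I Ia Ib Io phihat ghat
    by (intro cross_fitting.intro[OF M] cross_fitting_axioms.intro)
      (simp_all only: Z_meas Z_indep Z_law l_meas var_fin d tau folds_cover folds_disj folds_size
        split_cover split_disj split_o ghat_in phihat_meas ghat_meas C1 C2 C3,
       (use split_ab train_only in blast)+)
  show ?thesis
    using weak_conv_stat unfolding stat_def var_loss_def mean_loss_def loss_star_def .
qed

end
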